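(* Let $n\ge 3$ and let $\boldsymbol d=(d_1,\dots,d_n)$ with $2\le d_1\le\cdots\le d_n$ and $d_n-1\le\sum_{i=1}^{n-1}(d_i-1)$. Then there exists a global section $f$ of $E=\bigoplus_{i=1}^n\mathcal O(\mathbf 1_i)^{\oplus(d_i-1)}$ on $\mathbb P^{\boldsymbol d}=\prod_{i=1}^n\mathbb P^{d_i-1}$ with real coefficients whose zero scheme $\mathcal Z(f)$ is reduced of dimension $0$ and contains at least two non-real points.
   Context: $\mathbf 1_i\in\mathbb Z^n$ has $0$ in position $i$ and $1$ elsewhere; $\mathcal O(\boldsymbol\alpha)$ is the line bundle of multidegree $\boldsymbol\alpha$ on $\mathbb P^{\boldsymbol d}$, with coordinates $\pi^{(i)}=(\pi^{(i)}_1,\dots,\pi^{(i)}_{d_i})$ on the $i$th factor. Thus a global section of $E$ is a tuple of $\sum_i(d_i-1)$ multihomogeneous polynomials, $d_i-1$ of which are multilinear in the variable groups $\pi^{(l)}$, $l\ne i$; it has real coefficients if all these polynomials do. $\mathcal Z(f)$ is the subscheme of $\mathbb P^{\boldsymbol d}$ cut out by these polynomials. *)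

theory Defs
  imports Complex_Main "HOL-Library.FuncSet"
begin

(* Conventions: factors indexed i < n (0-based); factor i is P^(d i - 1) with
   homogeneous coordinates pi^(i)_j, j < d i.  A (complex) point of the affine
   cone is p :: nat => nat => complex, p i j = pi^(i)_j.
   A multihomogeneous polynomial of multidegree 1_i is multilinear in the groups
   l ~= i: it is given by its coefficient tensor T, indexed by the tuples
   J in PiE ({0..<n} - {i}) (%l. {0..<d l}). *)

definition idx :: "nat \<Rightarrow> (nat \<Rightarrow> nat) \<Rightarrow> nat \<Rightarrow> (nat \<Rightarrow> nat) set" where
  "idx n d i = PiE ({0..<n} - {i}) (\<lambda>l. {0..<d l})"

definition mlform :: "nat \<Rightarrow> (nat \<Rightarrow> nat) \<Rightarrow> nat \<Rightarrow> ((nat \<Rightarrow> nat) \<Rightarrow> real)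
    \<Rightarrow> (nat \<Rightarrow> nat \<Rightarrow> complex) \<Rightarrow> complex" where
  "mlform n d i T p = (\<Sum>J\<in>idx n d i. complex_of_real (T J) * (\<Prod>l\<in>{0..<n} - {i}. p l (J l)))"

definition dform :: "nat \<Rightarrow> (nat \<Rightarrow> nat) \<Rightarrow> nat \<Rightarrow> ((nat \<Rightarrow> nat) \<Rightarrow> real)
    \<Rightarrow> (nat \<Rightarrow> nat \<Rightarrow> complex) \<Rightarrow> (nat \<Rightarrow> nat \<Rightarrow> complex) \<Rightarrow> complex" where
  "dform n d i T p v = (\<Sum>J\<in>idx n d i. complex_of_real (T J) *
      (\<Sum>m\<in>{0..<n} - {i}. v m (J m) * (\<Prod>l\<in>{0..<n} - {i, m}. p l (J l))))"

definition is_point :: "nat \<Rightarrow> (nat \<Rightarrow> nat) \<Rightarrow> (nat \<Rightarrow> nat \<Rightarrow> complex) \<Rightarrow> bool" where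
  "is_point n d p \<longleftrightarrow> (\<forall>i<n. \<exists>j<d i. p i j \<noteq> 0)"

definition proj_eq :: "nat \<Rightarrow> (nat \<Rightarrow> nat) \<Rightarrow> (nat \<Rightarrow> nat \<Rightarrow> complex) \<Rightarrow> (nat \<Rightarrow> nat \<Rightarrow> complex) \<Rightarrow> bool" where
  "proj_eq n d p q \<longleftrightarrow> (\<forall>i<n. \<exists>c. c \<noteq> 0 \<and> (\<forall>j<d i. q i j = c * p i j))"

(* a global section of E with real coefficients: f i k is the coefficient tensor of the
   k-th (k < d i - 1) component in the summand O(1_i)^(d_i - 1) *)
definition in_Z :: "nat \<Rightarrow> (nat \<Rightarrow> nat) \<Rightarrow> (nat \<Rightarrow> nat \<Rightarrow> (nat \<Rightarrow> nat) \<Rightarrow> real)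
    \<Rightarrow> (nat \<Rightarrow> nat \<Rightarrow> complex) \<Rightarrow> bool" where
  "in_Z n d f p \<longleftrightarrow> is_point n d p \<and> (\<forall>i<n. \<forall>k<d i - 1. mlform n d i (f i k) p = 0)"

(* Zariski tangent space of Z(f) at p is zero: kernel of the differential of all
   equations on the cone is spanned by the Euler directions of the factors *)
definition tangent_zero :: "nat \<Rightarrow> (nat \<Rightarrow> nat) \<Rightarrow> (nat \<Rightarrow> nat \<Rightarrow> (nat \<Rightarrow> nat) \<Rightarrow> real)
    \<Rightarrow> (nat \<Rightarrow> nat \<Rightarrow> complex) \<Rightarrow> bool" where
  "tangent_zero n d f p \<longleftrightarrow>
     (\<forall>v. (\<forall>i<n. \<forall>k<d i - 1. dform n d i (f i k) p v = 0) \<longrightarrow>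
          (\<forall>i<n. \<exists>c. \<forall>j<d i. v i j = c * p i j))"

(* Z(f) is reduced of dimension 0: nonempty, finitely many points, and reduced
   (zero tangent space, i.e. local ring a field) at each point *)
definition reduced_dim0 :: "nat \<Rightarrow> (nat \<Rightarrow> nat) \<Rightarrow> (nat \<Rightarrow> nat \<Rightarrow> (nat \<Rightarrow> nat) \<Rightarrow> real) \<Rightarrow> bool" where
  "reduced_dim0 n d f \<longleftrightarrow>
     (\<exists>p. in_Z n d f p) \<and>
     (\<exists>S. finite S \<and> (\<forall>p. in_Z n d f p \<longrightarrow> (\<exists>q\<in>S. proj_eq n d q p))) \<and>
     (\<forall>p. in_Z n d f p \<longrightarrow> tangent_zero n d f p)"

definition real_point :: "nat \<Rightarrow> (nat \<Rightarrow> nat) \<Rightarrow> (nat \<Rightarrow> nat \<Rightarrow> complex) \<Rightarrow> bool" where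
  "real_point n d p \<longleftrightarrow> (\<exists>r :: nat \<Rightarrow> nat \<Rightarrow> real. proj_eq n d p (\<lambda>i j. complex_of_real (r i j)))"

end

theory Submission
  imports Defs "HOL-Computational_Algebra.Polynomial"
begin

(*
  Every equation is chosen as a product of linear forms, or of one bilinear form and linear forms,
  so that Z(f) can be listed.  A block pi^(l) enters through the forms
  <(1, t, ..., t^(d_l - 1)), pi^(l)>, which vanish for at most d_l - 1 values of t.

  If d_n >= 3, the k-th equation of the summand j is the product over l ~= j of these forms at a
  root tau(j, k), all roots being distinct; two equations of the largest summand get the roots
  +-sqrt(-1) and are replaced by the real and imaginary parts of the one at sqrt(-1).  Every
  equation needs a vanishing factor, there are sum (d_l - 1) equations and block l vanishes at no
  more than d_l - 1 roots, so every block vanishes at exactly d_l - 1 of them and at most one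
  factor of each equation vanishes.  Hence each block is determined by its roots, Z(f) is finite,
  and the differential of each equation only sees the one vanishing block, so the tangent spaces
  are zero.  A cyclic assignment of the roots to the blocks gives a point on which sqrt(-1) and
  -sqrt(-1) are roots of different blocks: it is not real and differs from its conjugate.

  If all d_j = 2, the two conjugate roots cannot share one equation.  Instead the equations 0, 1
  and n - 1 contain the bilinear form B(u, v) = (u_0 - u_1) v_1 - (u_0 + u_1) v_0 on the edges
  1 -> 2, 2 -> 0, 0 -> 1 of a triangle of factors, and all other factors of the equation q enter
  through a linear form vanishing at the real point (-t_q, 1), t_q = 1/(q + 2).  B(u, v) = 0 means
  v ~ M u for M = [[1, -1], [1, 1]], so around the triangle u is an eigenvector (1, +-sqrt(-1)) of
  M^3.  The same counting, with the fact that M and M^2 never map one pin to another, shows that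
  all other points are built from pins and that every point is reduced.
*)

section \<open>Moment forms and polynomials with prescribed roots\<close>

definition moment :: "nat \<Rightarrow> complex \<Rightarrow> (nat \<Rightarrow> complex) \<Rightarrow> complex" where
  "moment D t v = (\<Sum>j<D. t ^ j * v j)"

definition vec_poly :: "nat \<Rightarrow> (nat \<Rightarrow> complex) \<Rightarrow> complex poly" where
  "vec_poly D v = (\<Sum>j<D. monom (v j) j)"

definition root_poly :: "complex set \<Rightarrow> complex poly" where
  "root_poly V = (\<Prod>t\<in>V. [:-t, 1:])"

definition root_vec :: "complex set \<Rightarrow> nat \<Rightarrow> complex" where
  "root_vec V = coeff (root_poly V)"

lemma coeff_vec_poly: "coeff (vec_poly D v) j = (if j < D then v j else 0)"
  by (simp add: vec_poly_def coeff_sum)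

lemma poly_vec_poly: "poly (vec_poly D v) t = moment D t v"
  by (simp add: vec_poly_def moment_def poly_sum poly_monom mult.commute)

lemma degree_vec_poly: "degree (vec_poly D v) \<le> D - 1"
  unfolding vec_poly_def
  by (rule degree_sum_le) (auto intro: order.trans[OF degree_monom_le])

lemma
  assumes "\<exists>j<D. v j \<noteq> 0"
  shows finite_moment_roots: "finite {t. moment D t v = 0}"
    and card_moment_roots_le: "card {t. moment D t v = 0} \<le> D - 1"
proof -
  have "vec_poly D v \<noteq> 0"
    using assms by (metis coeff_0 coeff_vec_poly)
  then show "finite {t. moment D t v = 0}" "card {t. moment D t v = 0} \<le> D - 1"
    using poly_roots_finite card_poly_roots_bound degree_vec_poly[of D v]
    by (fastforce simp: poly_vec_poly)+
qed

lemma moment_coeff: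
  assumes "degree P < D"
  shows "moment D t (coeff P) = poly P t"
proof -
  have "poly P t = (\<Sum>j\<le>degree P. coeff P j * t ^ j)" by (rule poly_altdef)
  also have "\<dots> = (\<Sum>j<D. coeff P j * t ^ j)"
    by (rule sum.mono_neutral_left) (use assms in \<open>auto simp: coeff_eq_0\<close>)
  finally show ?thesis by (simp add: moment_def mult.commute)
qed

lemma degree_root_poly: "finite V \<Longrightarrow> degree (root_poly V) = card V"
  by (simp add: root_poly_def degree_prod_eq_sum_degree)

lemma root_vec_card: "finite V \<Longrightarrow> root_vec V (card V) = 1"
  using lead_coeff_prod[of "\<lambda>t. [:-t, 1:]" V]
  by (simp add: root_vec_def root_poly_def degree_root_poly[unfolded root_poly_def])

lemma moment_root_vec_eq_0_iff:
  assumes "finite V" "card V < D"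
  shows "moment D z (root_vec V) = 0 \<longleftrightarrow> z \<in> V"
proof -
  have "moment D z (root_vec V) = poly (root_poly V) z"
    unfolding root_vec_def by (rule moment_coeff) (simp add: degree_root_poly assms)
  then show ?thesis using assms(1) by (simp add: root_poly_def poly_prod)
qed

lemma moment_diff: "moment D t (\<lambda>j. v j - c * w j) = moment D t v - c * moment D t w"
  by (simp add: moment_def algebra_simps sum_subtractf sum_distrib_left)

text \<open>Otherwise subtracting the right multiple leaves a nonzero polynomial of degree \<open>< D - 1\<close>
  with \<open>D - 1\<close> roots.\<close>
lemma moment_kernel:
  assumes "finite V" "card V = D - 1" "D \<ge> 1"
    and "\<forall>t\<in>V. moment D t v = 0"
  shows "\<forall>j<D. v j = v (D - 1) * root_vec V j"
proof (rule ccontr)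
  assume "\<not> (\<forall>j<D. v j = v (D - 1) * root_vec V j)"
  define w where "w j = v j - v (D - 1) * root_vec V j" for j
  have "w (D - 1) = 0"
    using root_vec_card[OF assms(1)] by (simp add: w_def assms(2))
  moreover obtain j where "j < D" "w j \<noteq> 0"
    using \<open>\<not> _\<close> by (auto simp: w_def)
  ultimately have "j < D - 1"
    by (cases "j = D - 1") auto
  with \<open>w j \<noteq> 0\<close> have nz: "\<exists>j<D - 1. w j \<noteq> 0" by blast
  have "{..<D} = insert (D - 1) {..<D - 1}"
    using assms(3) by auto
  then have "moment D t w = moment (D - 1) t w" for t
    using \<open>w (D - 1) = 0\<close> by (simp add: moment_def)
  then have "V \<subseteq> {t. moment (D - 1) t w = 0}"
  proof (intro subsetI CollectI)
    fix t assume "t \<in> V"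
    have "moment D t w = moment D t v - v (D - 1) * moment D t (root_vec V)"
      unfolding w_def by (rule moment_diff)
    also have "\<dots> = 0"
      using assms \<open>t \<in> V\<close> moment_root_vec_eq_0_iff[OF assms(1), of D t] by simp
    finally show "moment (D - 1) t w = 0" using \<open>moment D t w = moment (D - 1) t w\<close> by simp
  qed
  then have "card V \<le> card {t. moment (D - 1) t w = 0}"
    using finite_moment_roots[OF nz] by (rule card_mono[rotated])
  also have "\<dots> \<le> D - 1 - 1"
    using card_moment_roots_le[OF nz] .
  finally have "card V \<le> D - 1 - 1" .
  then show False using assms(2) nz by linarith
qed

section \<open>Multilinear forms\<close>

definition cmlform :: "nat \<Rightarrow> (nat \<Rightarrow> nat) \<Rightarrow> nat \<Rightarrow> ((nat \<Rightarrow> nat) \<Rightarrow> complex)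
    \<Rightarrow> (nat \<Rightarrow> nat \<Rightarrow> complex) \<Rightarrow> complex" where
  "cmlform n d i T p = (\<Sum>J\<in>idx n d i. T J * (\<Prod>l\<in>{0..<n} - {i}. p l (J l)))"

lemma mlform_eq_cmlform: "mlform n d i T p = cmlform n d i (\<lambda>J. complex_of_real (T J)) p"
  by (simp add: mlform_def cmlform_def)

lemma cmlform_cong:
  "(\<And>J. J \<in> idx n d i \<Longrightarrow> T J = T' J) \<Longrightarrow> cmlform n d i T p = cmlform n d i T' p"
  by (simp add: cmlform_def)

lemma cmlform_sum:
  "finite R \<Longrightarrow> cmlform n d i (\<lambda>J. \<Sum>r\<in>R. T r J) p = (\<Sum>r\<in>R. cmlform n d i (T r) p)"
  unfolding cmlform_def sum_distrib_right by (rule sum.swap)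

lemma cmlform_scale: "cmlform n d i (\<lambda>J. a * T J) p = a * cmlform n d i T p"
  by (simp add: cmlform_def sum_distrib_left algebra_simps)

lemma cmlform_add:
  "cmlform n d i (\<lambda>J. T J + T' J) p = cmlform n d i T p + cmlform n d i T' p"
  by (simp add: cmlform_def algebra_simps sum.distrib)

lemma cmlform_prod_tensor:
  "cmlform n d i (\<lambda>J. \<Prod>l\<in>{0..<n} - {i}. c l (J l)) p
     = (\<Prod>l\<in>{0..<n} - {i}. \<Sum>j<d l. c l j * p l j)"
proof -
  have "cmlform n d i (\<lambda>J. \<Prod>l\<in>{0..<n} - {i}. c l (J l)) p
      = (\<Sum>J\<in>PiE ({0..<n} - {i}) (\<lambda>l. {0..<d l}). \<Prod>l\<in>{0..<n} - {i}. c l (J l) * p l (J l))"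
    by (simp add: cmlform_def idx_def prod.distrib)
  also have "\<dots> = (\<Prod>l\<in>{0..<n} - {i}. \<Sum>j\<in>{0..<d l}. c l j * p l j)"
    by (rule prod_sum_PiE[symmetric]) auto
  finally show ?thesis by (simp add: atLeast0LessThan)
qed

lemma dform_eq_sum_mlform:
  "dform n d i T p v = (\<Sum>m\<in>{0..<n} - {i}. mlform n d i T (p(m := v m)))"
proof -
  have upd: "(\<Prod>l\<in>{0..<n} - {i}. (p(m := v m)) l (J l))
      = v m (J m) * (\<Prod>l\<in>{0..<n} - {i, m}. p l (J l))"
    if "m \<in> {0..<n} - {i}" for m J
  proof -
    have "(\<Prod>l\<in>{0..<n} - {i}. (p(m := v m)) l (J l))
        = v m (J m) * (\<Prod>l\<in>{0..<n} - {i} - {m}. (p(m := v m)) l (J l))"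
      using that by (subst prod.remove[of _ m]) auto
    also have "(\<Prod>l\<in>{0..<n} - {i} - {m}. (p(m := v m)) l (J l))
        = (\<Prod>l\<in>{0..<n} - {i, m}. p l (J l))"
      by (rule prod.cong) auto
    finally show ?thesis .
  qed
  have "dform n d i T p v = (\<Sum>m\<in>{0..<n} - {i}. \<Sum>J\<in>idx n d i.
      complex_of_real (T J) * (v m (J m) * (\<Prod>l\<in>{0..<n} - {i, m}. p l (J l))))"
    unfolding dform_def sum_distrib_left by (rule sum.swap)
  also have "\<dots> = (\<Sum>m\<in>{0..<n} - {i}. mlform n d i T (p(m := v m)))"
    unfolding mlform_def by (rule sum.cong[OF refl], rule sum.cong[OF refl], subst upd) auto
  finally show ?thesis .
qed

definition moment_prod :: "nat \<Rightarrow> (nat \<Rightarrow> nat) \<Rightarrow> nat \<Rightarrow> complex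
    \<Rightarrow> (nat \<Rightarrow> nat \<Rightarrow> complex) \<Rightarrow> complex" where
  "moment_prod n d i t y = (\<Prod>l\<in>{0..<n} - {i}. moment (d l) t (y l))"

lemma cmlform_power_tensor:
  "cmlform n d i (\<lambda>J. t ^ (\<Sum>l\<in>{0..<n} - {i}. J l)) y = moment_prod n d i t y"
  using cmlform_prod_tensor[of n d i "\<lambda>l j. t ^ j" y]
  by (simp add: power_sum moment_prod_def moment_def)

lemma moment_prod_eq_0_iff:
  "moment_prod n d i t y = 0 \<longleftrightarrow> (\<exists>l\<in>{0..<n} - {i}. moment (d l) t (y l) = 0)"
  unfolding moment_prod_def by (rule prod_zero_iff) simp

lemma moment_prod_upd:
  assumes "l \<in> {0..<n} - {i}"
  shows "moment_prod n d i t (y(l := u))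
    = moment (d l) t u * (\<Prod>l'\<in>{0..<n} - {i} - {l}. moment (d l') t (y l'))"
  unfolding moment_prod_def using assms by (subst prod.remove[of _ l]) (auto intro!: prod.cong)

lemma moment_prod_upd_eq_0:
  assumes "l \<in> {0..<n} - {i}" "moment (d l) t (y l) = 0" "m \<noteq> l"
  shows "moment_prod n d i t (y(m := u)) = 0"
  using assms by (auto simp: moment_prod_eq_0_iff)

section \<open>Conjugate points and finiteness\<close>

lemma mlform_cnj: "mlform n d i T (\<lambda>l j. cnj (p l j)) = cnj (mlform n d i T p)"
  by (simp add: mlform_def)

lemma in_Z_cnj: "in_Z n d f p \<Longrightarrow> in_Z n d f (\<lambda>l j. cnj (p l j))"
  by (auto simp: in_Z_def is_point_def mlform_cnj)

lemma moment_cnj: "cnj (moment D z v) = moment D (cnj z) (\<lambda>j. cnj (v j))"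
  by (simp add: moment_def)

lemma moment_scale: "moment D z (\<lambda>j. c * v j) = c * moment D z v"
  by (simp add: moment_def sum_distrib_left algebra_simps)

text \<open>A real point, or one equal to its conjugate, has roots closed under conjugation in each
  block.\<close>
lemma block_root_not_conj_root:
  assumes l: "l < n" and z: "moment (d l) z (p l) = 0" "moment (d l) (cnj z) (p l) \<noteq> 0"
  shows "\<not> real_point n d p" "\<not> proj_eq n d p (\<lambda>l j. cnj (p l j))"
proof -
  have conj_multiple: False if "c \<noteq> 0" "\<forall>j<d l. cnj (p l j) = c * p l j" for c
  proof -
    have "cnj (moment (d l) (cnj z) (p l)) = moment (d l) z (\<lambda>j. c * p l j)"
      unfolding moment_cnj using that by (simp add: moment_def)
    then show False using z by (simp add: moment_scale)
  qed
  show "\<not> real_point n d p"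
  proof
    assume "real_point n d p"
    then obtain r c where "c \<noteq> 0" and rc: "\<forall>j<d l. complex_of_real (r l j) = c * p l j"
      using l unfolding real_point_def proj_eq_def by blast
    have "cnj (p l j) = (c / cnj c) * p l j" if "j < d l" for j
    proof -
      have e: "complex_of_real (r l j) = c * p l j"
        using rc that by blast
      have "cnj c * cnj (p l j) = cnj (c * p l j)"
        by simp
      also have "\<dots> = c * p l j"
        by (simp flip: e)
      finally have "cnj c * cnj (p l j) = c * p l j" .
      then show ?thesis using \<open>c \<noteq> 0\<close> by (simp add: field_simps)
    qed
    then show False using conj_multiple[of "c / cnj c"] \<open>c \<noteq> 0\<close> by simp
  qed
  show "\<not> proj_eq n d p (\<lambda>l j. cnj (p l j))"
    using l conj_multiple unfolding proj_eq_def by blast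
qed

lemma conj_pair_of_block_root:
  assumes "in_Z n d f p" "l < n" "moment (d l) z (p l) = 0" "moment (d l) (cnj z) (p l) \<noteq> 0"
  shows "\<exists>p q. in_Z n d f p \<and> in_Z n d f q \<and> \<not> proj_eq n d p q \<and>
                  \<not> real_point n d p \<and> \<not> real_point n d q"
proof -
  let ?q = "\<lambda>l j. cnj (p l j)"
  have "moment (d l) (cnj z) (?q l) = cnj (moment (d l) z (p l))"
    "moment (d l) (cnj (cnj z)) (?q l) = cnj (moment (d l) (cnj z) (p l))"
    by (simp_all add: moment_cnj)
  then have "moment (d l) (cnj z) (?q l) = 0" "moment (d l) (cnj (cnj z)) (?q l) \<noteq> 0"
    using assms(3,4) by simp_all
  then have "\<not> real_point n d ?q"
    using block_root_not_conj_root(1)[of l n d "cnj z" ?q] assms(2) by simp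
  moreover have "\<not> real_point n d p" "\<not> proj_eq n d p ?q"
    using block_root_not_conj_root[of l n d z p] assms(2-4) by auto
  ultimately show ?thesis
    using assms(1) in_Z_cnj[OF assms(1)] by (intro exI[of _ p] exI[of _ ?q]) simp
qed

lemma finite_points_of_finite_blocks:
  assumes "\<And>p. in_Z n d f p \<Longrightarrow> \<forall>l<n. \<exists>u\<in>C l. \<exists>c. c \<noteq> 0 \<and> (\<forall>j<d l. p l j = c * u j)"
    and "\<And>l. l < n \<Longrightarrow> finite (C l)"
  shows "\<exists>S. finite S \<and> (\<forall>p. in_Z n d f p \<longrightarrow> (\<exists>q\<in>S. proj_eq n d q p))"
proof (intro exI[of _ "PiE {..<n} C"] conjI allI impI)
  show "finite (PiE {..<n} C)" using assms(2) by (intro finite_PiE) auto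
  fix p assume "in_Z n d f p"
  then obtain g where g: "\<forall>l\<in>{..<n}. g l \<in> C l \<and> (\<exists>c. c \<noteq> 0 \<and> (\<forall>j<d l. p l j = c * g l j))"
    using assms(1) by (metis lessThan_iff)
  then have "restrict g {..<n} \<in> PiE {..<n} C" "proj_eq n d (restrict g {..<n}) p"
    unfolding proj_eq_def by auto
  then show "\<exists>q\<in>PiE {..<n} C. proj_eq n d q p" by blast
qed

section \<open>Systems of products of moment forms\<close>

lemma
  fixes A :: "'k \<Rightarrow> 'q set"
  assumes "finite K" "finite Q" "\<And>k. k \<in> K \<Longrightarrow> A k \<subseteq> Q" "Q \<subseteq> (\<Union>k\<in>K. A k)"
    and "(\<Sum>k\<in>K. card (A k)) \<le> card Q"
  shows cover_sum_card_eq: "(\<Sum>k\<in>K. card (A k)) = card Q"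
    and cover_disjoint: "\<lbrakk>k \<in> K; k' \<in> K; q \<in> A k; q \<in> A k'\<rbrakk> \<Longrightarrow> k = k'"
proof -
  have UQ: "(\<Union>k\<in>K. A k) = Q" using assms(3,4) by blast
  have fin: "finite (A k)" if "k \<in> K" for k
    using assms(2,3) that finite_subset by blast
  show sum_eq: "(\<Sum>k\<in>K. card (A k)) = card Q"
    using card_UN_le[OF assms(1), of A] UQ assms(5) by simp
  assume kk: "k \<in> K" "k' \<in> K" "q \<in> A k" "q \<in> A k'"
  show "k = k'"
  proof (rule ccontr)
    assume "k \<noteq> k'"
    then have "Q \<subseteq> (\<Union>l\<in>K - {k'}. A l) \<union> (A k' - {q})" using UQ kk by blast
    then have "card Q \<le> card ((\<Union>l\<in>K - {k'}. A l) \<union> (A k' - {q}))"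
      using assms(1) fin kk(2) by (intro card_mono) auto
    also have "\<dots> \<le> card (\<Union>l\<in>K - {k'}. A l) + card (A k' - {q})"
      by (rule card_Un_le)
    also have "\<dots> \<le> (\<Sum>l\<in>K - {k'}. card (A l)) + card (A k' - {q})"
      using card_UN_le[OF finite_Diff[OF assms(1)], of A "{k'}"] by (rule add_right_mono)
    also have "\<dots> < (\<Sum>l\<in>K - {k'}. card (A l)) + card (A k')"
    proof -
      have "0 < card (A k')" using kk(4) fin[OF kk(2)] card_gt_0_iff by blast
      then show ?thesis using kk(4) fin[OF kk(2)] by (simp add: card_Diff_singleton)
    qed
    also have "\<dots> = card Q"
      using sum.remove[OF assms(1) kk(2), of "\<lambda>l. card (A l)"] sum_eq by simp
    finally show False by simp
  qed
qed

definition eqs :: "nat \<Rightarrow> (nat \<Rightarrow> nat) \<Rightarrow> (nat \<times> nat) set" where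
  "eqs n d = (SIGMA i:{..<n}. {..<d i - 1})"

lemma finite_eqs [simp]: "finite (eqs n d)"
  by (simp add: eqs_def)

lemma card_eqs: "card (eqs n d) = (\<Sum>l<n. d l - 1)"
  by (simp add: eqs_def)

lemma mem_eqs [simp]: "(i, k) \<in> eqs n d \<longleftrightarrow> i < n \<and> k < d i - 1"
  by (simp add: eqs_def)

lemma ball_eqs_iff: "(\<forall>(i, k)\<in>eqs n d. P i k) \<longleftrightarrow> (\<forall>i<n. \<forall>k<d i - 1. P i k)"
  by (auto simp: eqs_def)

definition moment_prod_diff :: "nat \<Rightarrow> (nat \<Rightarrow> nat) \<Rightarrow> nat \<Rightarrow> complex
    \<Rightarrow> (nat \<Rightarrow> nat \<Rightarrow> complex) \<Rightarrow> (nat \<Rightarrow> nat \<Rightarrow> complex) \<Rightarrow> complex" where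
  "moment_prod_diff n d i t p v = (\<Sum>m\<in>{0..<n} - {i}. moment_prod n d i t (p(m := v m)))"

locale moment_solution =
  fixes n :: nat and d :: "nat \<Rightarrow> nat" and \<tau> :: "nat \<times> nat \<Rightarrow> complex"
    and p :: "nat \<Rightarrow> nat \<Rightarrow> complex"
  assumes inj_\<tau>: "inj_on \<tau> (eqs n d)"
    and point: "is_point n d p"
    and solves: "\<And>i k. (i, k) \<in> eqs n d \<Longrightarrow> moment_prod n d i (\<tau> (i, k)) p = 0"
begin

definition roots :: "nat \<Rightarrow> (nat \<times> nat) set" where
  "roots l = {q \<in> eqs n d. fst q \<noteq> l \<and> moment (d l) (\<tau> q) (p l) = 0}"

lemma roots_subset: "roots l \<subseteq> eqs n d"
  by (auto simp: roots_def)

lemma card_roots_le: "l < n \<Longrightarrow> card (roots l) \<le> d l - 1"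
proof -
  assume "l < n"
  then have nz: "\<exists>j<d l. p l j \<noteq> 0" using point by (simp add: is_point_def)
  have "card (roots l) = card (\<tau> ` roots l)"
    using inj_on_subset[OF inj_\<tau> roots_subset] by (simp add: card_image)
  also have "\<dots> \<le> card {t. moment (d l) t (p l) = 0}"
    by (intro card_mono finite_moment_roots[OF nz]) (auto simp: roots_def)
  also have "\<dots> \<le> d l - 1" by (rule card_moment_roots_le[OF nz])
  finally show ?thesis .
qed

lemma eqs_covered: "eqs n d \<subseteq> (\<Union>l\<in>{..<n}. roots l)"
proof
  fix q assume "q \<in> eqs n d"
  then obtain i k where q: "q = (i, k)" "(i, k) \<in> eqs n d" by (cases q) auto
  then obtain l where "l \<in> {0..<n} - {i}" "moment (d l) (\<tau> q) (p l) = 0"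
    using solves moment_prod_eq_0_iff by blast
  then show "q \<in> (\<Union>l\<in>{..<n}. roots l)" using q by (auto simp: roots_def)
qed

lemma
  shows card_roots: "l < n \<Longrightarrow> card (roots l) = d l - 1"
    and roots_disjoint: "\<lbrakk>l < n; l' < n; q \<in> roots l; q \<in> roots l'\<rbrakk> \<Longrightarrow> l = l'"
proof -
  have le: "(\<Sum>l<n. card (roots l)) \<le> card (eqs n d)"
    unfolding card_eqs by (rule sum_mono) (rule card_roots_le, simp)
  have "(\<Sum>l<n. card (roots l)) = (\<Sum>l<n. d l - 1)"
    using cover_sum_card_eq[OF _ _ _ eqs_covered le] roots_subset by (simp add: card_eqs)
  then show "l < n \<Longrightarrow> card (roots l) = d l - 1"
    using sum_mono_inv[of "\<lambda>l. card (roots l)" "{..<n}" "\<lambda>l. d l - 1" l] card_roots_le by auto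
  show "\<lbrakk>l < n; l' < n; q \<in> roots l; q \<in> roots l'\<rbrakk> \<Longrightarrow> l = l'"
    using cover_disjoint[OF _ _ _ eqs_covered le] roots_subset by auto
qed

lemma kernel_roots:
  assumes "l < n" "\<forall>t\<in>\<tau> ` roots l. moment (d l) t u = 0"
  shows "\<forall>j<d l. u j = u (d l - 1) * root_vec (\<tau> ` roots l) j"
proof (rule moment_kernel)
  show "card (\<tau> ` roots l) = d l - 1"
    using card_roots[OF assms(1)] inj_on_subset[OF inj_\<tau> roots_subset] by (simp add: card_image)
  show "1 \<le> d l" using point assms(1) by (auto simp: is_point_def)
qed (use assms(2) finite_subset[OF roots_subset] in auto)

lemma block_eq_root_vec:
  assumes "l < n"
  shows "p l (d l - 1) \<noteq> 0" "\<forall>j<d l. p l j = p l (d l - 1) * root_vec (\<tau> ` roots l) j"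
proof -
  show eq: "\<forall>j<d l. p l j = p l (d l - 1) * root_vec (\<tau> ` roots l) j"
    by (rule kernel_roots[OF assms]) (auto simp: roots_def)
  show "p l (d l - 1) \<noteq> 0"
    using eq point assms by (auto simp: is_point_def)
qed

text \<open>At a root \<open>q \<in> roots l\<close> only the factor \<open>l\<close> vanishes, so the differential of the equation
  \<open>q\<close> only sees the block \<open>v l\<close>.\<close>
lemma tangent_block_root:
  assumes "q \<in> roots l" "l < n" "moment_prod_diff n d (fst q) (\<tau> q) p v = 0"
  shows "moment (d l) (\<tau> q) (v l) = 0"
proof -
  obtain i k where q: "q = (i, k)" "i < n" "k < d i - 1" "i \<noteq> l" "moment (d l) (\<tau> q) (p l) = 0"
    using assms(1) by (cases q) (auto simp: roots_def)
  have l: "l \<in> {0..<n} - {i}" using q assms(2) by auto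
  have "(\<Prod>l'\<in>{0..<n} - {i} - {l}. moment (d l') (\<tau> q) (p l')) \<noteq> 0"
  proof
    assume "(\<Prod>l'\<in>{0..<n} - {i} - {l}. moment (d l') (\<tau> q) (p l')) = 0"
    then have "\<exists>l'\<in>{0..<n} - {i} - {l}. moment (d l') (\<tau> q) (p l') = 0"
      by (subst (asm) prod_zero_iff) auto
    then obtain l' where l': "l' \<in> {0..<n} - {i} - {l}" "moment (d l') (\<tau> q) (p l') = 0" ..
    then have "q \<in> roots l'" using q by (auto simp: roots_def)
    then show False using roots_disjoint[OF assms(2) _ assms(1)] l' by auto
  qed
  moreover have "moment_prod_diff n d i (\<tau> q) p v = moment_prod n d i (\<tau> q) (p(l := v l))"
    unfolding moment_prod_diff_def using l moment_prod_upd_eq_0[of l n i d "\<tau> q" p, OF l q(5)]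
    by (subst sum.remove[of _ l]) auto
  ultimately show ?thesis
    using assms(3) q(1) moment_prod_upd[OF l] by simp
qed

lemma tangent_block:
  assumes "\<And>i k. (i, k) \<in> eqs n d \<Longrightarrow> moment_prod_diff n d i (\<tau> (i, k)) p v = 0" "l < n"
  shows "\<exists>c. \<forall>j<d l. v l j = c * p l j"
proof -
  have "moment (d l) (\<tau> q) (v l) = 0" if "q \<in> roots l" for q
  proof -
    obtain i k where q: "q = (i, k)" by (cases q)
    then have "(i, k) \<in> eqs n d" using that roots_subset by blast
    then show ?thesis using tangent_block_root[OF that assms(2)] assms(1) q by simp
  qed
  then have "\<forall>t\<in>\<tau> ` roots l. moment (d l) t (v l) = 0" by blast
  then have v: "\<forall>j<d l. v l j = v l (d l - 1) * root_vec (\<tau> ` roots l) j"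
    by (rule kernel_roots[OF assms(2)])
  show ?thesis
  proof (intro exI allI impI)
    fix j assume "j < d l"
    let ?r = "root_vec (\<tau> ` roots l) j"
    have "v l j = v l (d l - 1) * ?r" using v \<open>j < d l\<close> by blast
    moreover have "p l j = p l (d l - 1) * ?r" using block_eq_root_vec(2)[OF assms(2)] \<open>j < d l\<close> by blast
    ultimately show "v l j = v l (d l - 1) / p l (d l - 1) * p l j"
      using block_eq_root_vec(1)[OF assms(2)] by simp
  qed
qed

end

lemma point_of_assignment:
  fixes \<tau> :: "nat \<times> nat \<Rightarrow> complex"
  assumes \<sigma>: "\<forall>q\<in>eqs n d. \<sigma> q < n \<and> \<sigma> q \<noteq> fst q"
    and fibre: "\<forall>l<n. card {q \<in> eqs n d. \<sigma> q = l} < d l"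
  defines "P \<equiv> \<lambda>l. root_vec (\<tau> ` {q \<in> eqs n d. \<sigma> q = l})"
  shows "is_point n d P"
    and "\<And>q. q \<in> eqs n d \<Longrightarrow> moment_prod n d (fst q) (\<tau> q) P = 0"
    and "\<And>l z. l < n \<Longrightarrow> moment (d l) z (P l) = 0 \<longleftrightarrow> z \<in> \<tau> ` {q \<in> eqs n d. \<sigma> q = l}"
proof -
  have fin: "finite (\<tau> ` {q \<in> eqs n d. \<sigma> q = l})" for l
    by (rule finite_imageI, rule finite_subset[OF _ finite_eqs]) auto
  have card_lt: "card (\<tau> ` {q \<in> eqs n d. \<sigma> q = l}) < d l" if "l < n" for l
  proof -
    have "finite {q \<in> eqs n d. \<sigma> q = l}" by (rule finite_subset[OF _ finite_eqs]) auto
    then show ?thesis using card_image_le[of _ \<tau>] fibre[rule_format, OF that] le_less_trans by blast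
  qed
  show roots: "moment (d l) z (P l) = 0 \<longleftrightarrow> z \<in> \<tau> ` {q \<in> eqs n d. \<sigma> q = l}" if "l < n" for l z
    unfolding P_def by (rule moment_root_vec_eq_0_iff[OF fin card_lt[OF that]])
  show "is_point n d P"
    unfolding is_point_def
  proof (intro allI impI)
    fix l assume "l < n"
    then show "\<exists>j<d l. P l j \<noteq> 0"
      using root_vec_card[OF fin] card_lt[OF \<open>l < n\<close>] unfolding P_def
      by (intro exI[of _ "card (\<tau> ` {q \<in> eqs n d. \<sigma> q = l})"]) simp
  qed
  show "moment_prod n d (fst q) (\<tau> q) P = 0" if "q \<in> eqs n d" for q
  proof -
    have "\<sigma> q \<in> {0..<n} - {fst q}" using \<sigma>[rule_format, OF that] by auto
    moreover have "\<tau> q \<in> \<tau> ` {q' \<in> eqs n d. \<sigma> q' = \<sigma> q}"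
      using that by (intro imageI) simp
    then have "moment (d (\<sigma> q)) (\<tau> q) (P (\<sigma> q)) = 0"
      using roots \<sigma>[rule_format, OF that] by simp
    ultimately show ?thesis unfolding moment_prod_eq_0_iff by blast
  qed
qed

section \<open>Cyclic assignments of equations to factors\<close>

definition block_start :: "(nat \<Rightarrow> nat) \<Rightarrow> nat \<Rightarrow> nat" where
  "block_start d i = (\<Sum>k<i. d k - 1)"

definition position :: "(nat \<Rightarrow> nat) \<Rightarrow> nat \<times> nat \<Rightarrow> nat" where
  "position d q = block_start d (fst q) + snd q"

definition block_of :: "(nat \<Rightarrow> nat) \<Rightarrow> nat \<Rightarrow> nat" where
  "block_of d r = (LEAST l. r < block_start d (Suc l))"

definition cyclic_shift :: "nat \<Rightarrow> nat \<Rightarrow> nat \<Rightarrow> nat" where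
  "cyclic_shift N h r = (if r + h < N then r + h else r + h - N)"

lemma block_start_0 [simp]: "block_start d 0 = 0"
  by (simp add: block_start_def)

lemma block_start_Suc: "block_start d (Suc i) = block_start d i + (d i - 1)"
  by (simp add: block_start_def)

lemma block_start_mono: "i \<le> i' \<Longrightarrow> block_start d i \<le> block_start d i'"
  unfolding block_start_def by (rule sum_mono2) auto

lemma block_of_eq: "block_start d i \<le> r \<Longrightarrow> r < block_start d (Suc i) \<Longrightarrow> block_of d r = i"
  unfolding block_of_def
proof (rule Least_equality)
  fix l assume "block_start d i \<le> r" "r < block_start d (Suc l)"
  then show "i \<le> l"
    using block_start_mono[of "Suc l" i d] by (cases "i \<le> l") auto
qed

lemma block_of_bounds:
  assumes "r < block_start d n"
  shows "block_of d r < n" "block_start d (block_of d r) \<le> r" "r < block_start d (Suc (block_of d r))"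
proof -
  have ex: "r < block_start d (Suc (n - 1))" using assms by (cases n) auto
  show "r < block_start d (Suc (block_of d r))"
    unfolding block_of_def by (rule LeastI[of "\<lambda>l. r < block_start d (Suc l)", OF ex])
  have "block_of d r \<le> n - 1"
    unfolding block_of_def by (rule Least_le[of "\<lambda>l. r < block_start d (Suc l)", OF ex])
  then show "block_of d r < n" using assms by (cases n) auto
  show "block_start d (block_of d r) \<le> r"
  proof (cases "block_of d r")
    case (Suc l)
    then have "\<not> r < block_start d (Suc l)"
      unfolding block_of_def by (metis lessI not_less_Least)
    then show ?thesis using Suc by simp
  qed simp
qed

lemma block_of_position: "q \<in> eqs n d \<Longrightarrow> block_of d (position d q) = fst q"
  by (cases q) (auto simp: position_def block_start_Suc intro: block_of_eq)

lemma position_lt: "q \<in> eqs n d \<Longrightarrow> position d q < block_start d n"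
proof -
  assume q: "q \<in> eqs n d"
  then have "position d q < block_start d (Suc (fst q))"
    by (cases q) (simp add: position_def block_start_Suc)
  also have "\<dots> \<le> block_start d n"
    using q by (intro block_start_mono) (cases q, simp)
  finally show ?thesis .
qed

lemma inj_on_position: "inj_on (position d) (eqs n d)"
proof (rule inj_onI)
  fix q q' assume q: "q \<in> eqs n d" "q' \<in> eqs n d" "position d q = position d q'"
  then have "fst q = fst q'" using block_of_position by metis
  with q(3) show "q = q'" by (simp add: position_def prod_eq_iff)
qed

lemma cyclic_shift_lt: "r < N \<Longrightarrow> h \<le> N \<Longrightarrow> cyclic_shift N h r < N"
  by (auto simp: cyclic_shift_def)

lemma cyclic_shift_inj:
  "r < N \<Longrightarrow> r' < N \<Longrightarrow> h \<le> N \<Longrightarrow> cyclic_shift N h r = cyclic_shift N h r' \<Longrightarrow> r = r'"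
  by (auto simp: cyclic_shift_def split: if_splits)

text \<open>The equation at position \<open>r\<close> goes to the block containing position \<open>r + h\<close> (mod \<open>N\<close>).
  Each factor receives at most as many equations as its block has positions, and none of its own
  block once \<open>h\<close> lies between the largest block size and \<open>N\<close> minus it.\<close>
lemma shift_assignment:
  assumes h: "\<And>i. i < n \<Longrightarrow> d i - 1 \<le> h" "\<And>i. i < n \<Longrightarrow> h + (d i - 1) \<le> block_start d n"
    and "h \<le> block_start d n"
  defines "\<sigma> \<equiv> \<lambda>q. block_of d (cyclic_shift (block_start d n) h (position d q))"
  shows "\<And>q. q \<in> eqs n d \<Longrightarrow> \<sigma> q < n \<and> \<sigma> q \<noteq> fst q"
    and "\<And>l. l < n \<Longrightarrow> card {q \<in> eqs n d. \<sigma> q = l} \<le> d l - 1"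
proof -
  let ?N = "block_start d n"
  let ?g = "\<lambda>q. cyclic_shift ?N h (position d q)"
  have g_lt: "?g q < ?N" if "q \<in> eqs n d" for q
    using cyclic_shift_lt[OF position_lt[OF that] assms(3)] .
  show "\<sigma> q < n \<and> \<sigma> q \<noteq> fst q" if q: "q \<in> eqs n d" for q
  proof
    show "\<sigma> q < n" unfolding \<sigma>_def by (rule block_of_bounds(1)[OF g_lt[OF q]])
    obtain i k where ik: "q = (i, k)" "i < n" "k < d i - 1" using q by (cases q) auto
    show "\<sigma> q \<noteq> fst q"
    proof
      assume "\<sigma> q = fst q"
      then have in_block: "block_start d i \<le> ?g q" "?g q < block_start d i + (d i - 1)"
        using block_of_bounds(2,3)[OF g_lt[OF q]] ik by (auto simp: \<sigma>_def block_start_Suc)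
      show False
      proof (cases "position d q + h < ?N")
        case True
        then show False using in_block h(1)[OF ik(2)] by (simp add: cyclic_shift_def position_def ik(1))
      next
        case False
        then show False using in_block h(2)[OF ik(2)] ik(3) by (simp add: cyclic_shift_def position_def ik(1))
      qed
    qed
  qed
  show "card {q \<in> eqs n d. \<sigma> q = l} \<le> d l - 1" if "l < n" for l
  proof -
    have "inj_on ?g (eqs n d)"
    proof (rule inj_onI)
      fix q q' assume "q \<in> eqs n d" "q' \<in> eqs n d" "?g q = ?g q'"
      then have "position d q = position d q'"
        using cyclic_shift_inj[OF position_lt position_lt assms(3)] by blast
      then show "q = q'" using inj_on_position[THEN inj_onD] \<open>q \<in> _\<close> \<open>q' \<in> _\<close> by blast
    qed
    then have "inj_on ?g {q \<in> eqs n d. \<sigma> q = l}" by (rule inj_on_subset) auto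
    moreover have "?g ` {q \<in> eqs n d. \<sigma> q = l} \<subseteq> {block_start d l..<block_start d (Suc l)}"
      using block_of_bounds(2,3)[OF g_lt] by (auto simp: \<sigma>_def)
    ultimately have "card {q \<in> eqs n d. \<sigma> q = l} \<le> card {block_start d l..<block_start d (Suc l)}"
      by (intro card_inj_on_le[where f = ?g]) auto
    then show ?thesis by (simp add: block_start_Suc)
  qed
qed

lemma block_of_eq_0_iff: "r < block_start d n \<Longrightarrow> block_of d r = 0 \<longleftrightarrow> r < d 0 - 1"
  using block_of_bounds(3)[of r d n] block_of_eq[of d 0 r] by (auto simp: block_start_Suc)

text \<open>The two equations \<open>(n - 1, 0)\<close> and \<open>(n - 1, d (n - 1) - 2)\<close> are the first and last
  of the largest block; shifting by its size (plus one if all blocks have that size) sends them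
  to different blocks.\<close>
lemma separating_assignment:
  assumes n: "3 \<le> n" and d0: "2 \<le> d 0"
    and mono: "\<And>i. i < n \<Longrightarrow> d 0 \<le> d i" "\<And>i. i < n \<Longrightarrow> d i \<le> d (n - 1)"
    and big: "3 \<le> d (n - 1)" and sum: "d (n - 1) - 1 \<le> (\<Sum>i<n - 1. d i - 1)"
  shows "\<exists>\<sigma>. (\<forall>q\<in>eqs n d. \<sigma> q < n \<and> \<sigma> q \<noteq> fst q) \<and>
             (\<forall>l<n. card {q \<in> eqs n d. \<sigma> q = l} \<le> d l - 1) \<and>
             \<sigma> (n - 1, 0) \<noteq> \<sigma> (n - 1, d (n - 1) - 2)"
proof -
  define s where "s = d (n - 1) - 1"
  define N where "N = block_start d n"
  define h where "h = (if d 0 = d (n - 1) then s + 1 else s)"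
  have "n = Suc (n - 1)" using n by simp
  then have N: "N = block_start d (n - 1) + s"
    unfolding N_def s_def by (metis block_start_Suc)
  have s: "2 \<le> s" "s \<le> block_start d (n - 1)" "\<And>i. i < n \<Longrightarrow> d i - 1 \<le> s"
    using big sum diff_le_mono[OF mono(2)] by (auto simp: s_def block_start_def)
  have h1: "d i - 1 \<le> h" if "i < n" for i using s(3)[OF that] by (simp add: h_def)
  have h2: "h + (d i - 1) \<le> N" if "i < n" for i
  proof (cases "d 0 = d (n - 1)")
    case True
    then have "d i - 1 = s" if "i < n" for i
      using mono(1)[OF that] mono(2)[OF that] by (simp add: s_def)
    then have "N = n * s" "d i - 1 = s" using that by (simp_all add: N_def block_start_def)
    moreover have "3 * s \<le> n * s" using n by simp
    moreover have "h = s + 1" using True by (simp add: h_def)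
    ultimately show ?thesis using s(1) by linarith
  next
    case False
    then show ?thesis using s(2) s(3)[OF that] N by (simp add: h_def)
  qed
  have h3: "h \<le> N" using h2[of 0] n by simp
  define \<sigma> where "\<sigma> q = block_of d (cyclic_shift N h (position d q))" for q
  have pos: "position d (n - 1, 0) = N - s" "position d (n - 1, d (n - 1) - 2) = N - 1"
    using N s(1) by (auto simp: position_def s_def numeral_2_eq_2)
  have shifted: "cyclic_shift N h (N - s) < d 0 - 1 \<and> \<not> cyclic_shift N h (N - 1) < d 0 - 1"
  proof (cases "d 0 = d (n - 1)")
    case True
    then have "cyclic_shift N h (N - s) = 1" "cyclic_shift N h (N - 1) = s"
      using N s(1,2) by (auto simp: cyclic_shift_def h_def)
    moreover have "d 0 - 1 = s" using True by (simp add: s_def)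
    ultimately show ?thesis using s(1) by simp
  next
    case False
    then have "d 0 - 1 \<le> s - 1" using mono(2)[of 0] n by (simp add: s_def)
    moreover have "cyclic_shift N h (N - s) = 0" "cyclic_shift N h (N - 1) = s - 1"
      using False N s(1,2) by (auto simp: cyclic_shift_def h_def)
    ultimately show ?thesis using d0 by simp
  qed
  have "N - s < N" "N - 1 < N" using N s(1,2) by auto
  then have sep: "\<sigma> (n - 1, 0) = 0" "\<sigma> (n - 1, d (n - 1) - 2) \<noteq> 0"
    using shifted block_of_eq_0_iff[of _ d n] cyclic_shift_lt[OF _ h3] unfolding \<sigma>_def pos N_def
    by auto
  have "\<forall>q\<in>eqs n d. \<sigma> q < n \<and> \<sigma> q \<noteq> fst q" "\<forall>l<n. card {q \<in> eqs n d. \<sigma> q = l} \<le> d l - 1"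
    using shift_assignment[of n d h] h1 h2 h3 unfolding \<sigma>_def N_def by auto
  with sep show ?thesis by (intro exI[of _ \<sigma>]) simp
qed

lemma reduced_dim0_moment_system:
  assumes inj: "inj_on \<tau> (eqs n d)"
    and Z: "\<And>p. in_Z n d f p \<longleftrightarrow>
              is_point n d p \<and> (\<forall>(i, k)\<in>eqs n d. moment_prod n d i (\<tau> (i, k)) p = 0)"
    and D: "\<And>p v. (\<forall>i<n. \<forall>k<d i - 1. dform n d i (f i k) p v = 0) \<longleftrightarrow>
              (\<forall>(i, k)\<in>eqs n d. moment_prod_diff n d i (\<tau> (i, k)) p v = 0)"
    and P: "in_Z n d f P"
  shows "reduced_dim0 n d f"
proof -
  have sol: "moment_solution n d \<tau> p" if "in_Z n d f p" for p
    using that inj unfolding Z by unfold_locales auto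
  have "\<exists>S. finite S \<and> (\<forall>p. in_Z n d f p \<longrightarrow> (\<exists>q\<in>S. proj_eq n d q p))"
  proof (rule finite_points_of_finite_blocks[where C = "\<lambda>l. root_vec ` Pow (\<tau> ` eqs n d)"])
    fix p assume "in_Z n d f p"
    then interpret moment_solution n d \<tau> p by (rule sol)
    show "\<forall>l<n. \<exists>u\<in>root_vec ` Pow (\<tau> ` eqs n d). \<exists>c. c \<noteq> 0 \<and> (\<forall>j<d l. p l j = c * u j)"
      using block_eq_root_vec roots_subset by blast
  qed simp
  moreover have "tangent_zero n d f p" if "in_Z n d f p" for p
  proof -
    interpret moment_solution n d \<tau> p by (rule sol[OF that])
    show ?thesis
      unfolding tangent_zero_def D by (auto intro: tangent_block)
  qed
  ultimately show ?thesis unfolding reduced_dim0_def using P by blast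
qed

section \<open>The case \<open>d (n - 1) \<ge> 3\<close>\<close>

text \<open>The equations of the case \<open>d (n - 1) \<ge> 3\<close>: the equation \<open>(i, k)\<close> is the product of the
  moment forms at \<open>moment_root n d (i, k)\<close>, except that the two equations with the roots \<open>\<i>\<close> and
  \<open>-\<i>\<close> are replaced by the real and imaginary parts of the one at \<open>\<i>\<close>.\<close>
definition moment_root :: "nat \<Rightarrow> (nat \<Rightarrow> nat) \<Rightarrow> nat \<times> nat \<Rightarrow> complex" where
  "moment_root n d q = (if q = (n - 1, 0) then \<i> else if q = (n - 1, d (n - 1) - 2) then - \<i>
     else of_nat (position d q))"

definition moment_tensor :: "nat \<Rightarrow> (nat \<Rightarrow> nat) \<Rightarrow> nat \<Rightarrow> nat \<Rightarrow> (nat \<Rightarrow> nat) \<Rightarrow> real" where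
  "moment_tensor n d i k J = (let e = (\<Sum>l\<in>{0..<n} - {i}. J l) in
     if (i, k) = (n - 1, 0) then Re (\<i> ^ e)
     else if (i, k) = (n - 1, d (n - 1) - 2) then Im (\<i> ^ e)
     else real (position d (i, k)) ^ e)"

definition moment_eval :: "nat \<Rightarrow> (nat \<Rightarrow> nat) \<Rightarrow> nat \<times> nat \<Rightarrow> (complex \<Rightarrow> complex) \<Rightarrow> complex" where
  "moment_eval n d q F = (if q = (n - 1, 0) then (F \<i> + F (- \<i>)) / 2
     else if q = (n - 1, d (n - 1) - 2) then (F \<i> - F (- \<i>)) / (2 * \<i>)
     else F (of_nat (position d q)))"

lemma
  assumes "q \<noteq> (n - 1, 0)" "q \<noteq> (n - 1, d (n - 1) - 2)"
  shows moment_eval_other: "moment_eval n d q F = F (of_nat (position d q))"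
    and moment_root_other: "moment_root n d q = of_nat (position d q)"
  using assms unfolding moment_eval_def moment_root_def by (simp_all only: if_False)

lemma mlform_Re_power:
  "mlform n d i (\<lambda>J. Re (t ^ (\<Sum>l\<in>{0..<n} - {i}. J l))) y
     = (moment_prod n d i t y + moment_prod n d i (cnj t) y) / 2"
proof -
  let ?e = "\<lambda>J. \<Sum>l\<in>{0..<n} - {i}. J l"
  have Re: "complex_of_real (Re z) = (1/2) * z + (1/2) * cnj z" for z
    using complex_add_cnj[of z] by (simp add: field_simps)
  have "mlform n d i (\<lambda>J. Re (t ^ ?e J)) y = cmlform n d i (\<lambda>J. (1/2) * t ^ ?e J + (1/2) * cnj t ^ ?e J) y"
    unfolding mlform_eq_cmlform by (rule cmlform_cong) (simp add: Re)
  also have "\<dots> = (1/2) * moment_prod n d i t y + (1/2) * moment_prod n d i (cnj t) y"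
    by (simp only: cmlform_add cmlform_scale cmlform_power_tensor)
  finally show ?thesis by simp
qed

lemma mlform_Im_power:
  "mlform n d i (\<lambda>J. Im (t ^ (\<Sum>l\<in>{0..<n} - {i}. J l))) y
     = (moment_prod n d i t y - moment_prod n d i (cnj t) y) / (2 * \<i>)"
proof -
  let ?e = "\<lambda>J. \<Sum>l\<in>{0..<n} - {i}. J l"
  have Im: "complex_of_real (Im z) = (1/(2*\<i>)) * z + (- 1/(2*\<i>)) * cnj z" for z
    using complex_diff_cnj[of z] by (simp add: field_simps)
  have "mlform n d i (\<lambda>J. Im (t ^ ?e J)) y
      = cmlform n d i (\<lambda>J. (1/(2*\<i>)) * t ^ ?e J + (- 1/(2*\<i>)) * cnj t ^ ?e J) y"
    unfolding mlform_eq_cmlform by (rule cmlform_cong) (simp only: Im complex_cnj_power)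
  also have "\<dots> = (1/(2*\<i>)) * moment_prod n d i t y + (- 1/(2*\<i>)) * moment_prod n d i (cnj t) y"
    by (simp only: cmlform_add cmlform_scale cmlform_power_tensor)
  finally show ?thesis by (simp add: field_simps)
qed

lemma mlform_real_power:
  "mlform n d i (\<lambda>J. r ^ (\<Sum>l\<in>{0..<n} - {i}. J l)) y = moment_prod n d i (of_real r) y"
  unfolding mlform_eq_cmlform by (simp add: cmlform_power_tensor)

lemma mlform_moment_tensor:
  "mlform n d i (moment_tensor n d i k) y = moment_eval n d (i, k) (\<lambda>t. moment_prod n d i t y)"
proof -
  consider (a) "(i, k) = (n - 1, 0)" | (b) "(i, k) \<noteq> (n - 1, 0)" "(i, k) = (n - 1, d (n - 1) - 2)"
    | (c) "(i, k) \<noteq> (n - 1, 0)" "(i, k) \<noteq> (n - 1, d (n - 1) - 2)" by blast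
  then show ?thesis
  proof cases
    case a
    then have "moment_tensor n d i k = (\<lambda>J. Re (\<i> ^ (\<Sum>l\<in>{0..<n} - {i}. J l)))"
      by (auto simp: moment_tensor_def)
    then show ?thesis using a by (simp add: mlform_Re_power moment_eval_def)
  next
    case b
    then have "moment_tensor n d i k = (\<lambda>J. Im (\<i> ^ (\<Sum>l\<in>{0..<n} - {i}. J l)))"
      by (auto simp: moment_tensor_def)
    then show ?thesis using b by (simp add: mlform_Im_power moment_eval_def)
  next
    case c
    then have "moment_tensor n d i k = (\<lambda>J. real (position d (i, k)) ^ (\<Sum>l\<in>{0..<n} - {i}. J l))"
      by (auto simp: moment_tensor_def)
    then show ?thesis using c by (simp add: mlform_real_power moment_eval_other)
  qed
qed

lemma moment_eval_linear: "\<exists>a b x y. \<forall>F. moment_eval n d q F = a * F x + b * F y"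
proof -
  consider (a) "q = (n - 1, 0)" | (b) "q \<noteq> (n - 1, 0)" "q = (n - 1, d (n - 1) - 2)"
    | (c) "q \<noteq> (n - 1, 0)" "q \<noteq> (n - 1, d (n - 1) - 2)" by blast
  then show ?thesis
  proof cases
    case a
    then show ?thesis
      by (intro exI[of _ "1/2"] exI[of _ "1/2"] exI[of _ \<i>] exI[of _ "-\<i>"]) (simp add: moment_eval_def field_simps)
  next
    case b
    then show ?thesis
      by (intro exI[of _ "1/(2*\<i>)"] exI[of _ "-1/(2*\<i>)"] exI[of _ \<i>] exI[of _ "-\<i>"])
        (simp add: moment_eval_def field_simps)
  next
    case c
    then show ?thesis
      by (intro exI[of _ 1] exI[of _ 0] exI[of _ "of_nat (position d q)"]) (simp add: moment_eval_def)
  qed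
qed

lemma moment_eval_sum:
  "finite M \<Longrightarrow> moment_eval n d q (\<lambda>t. \<Sum>m\<in>M. G m t) = (\<Sum>m\<in>M. moment_eval n d q (G m))"
  using moment_eval_linear[of n d q] by (auto simp: sum_distrib_left sum.distrib)

lemma dform_moment_tensor:
  "dform n d i (moment_tensor n d i k) p v = moment_eval n d (i, k) (\<lambda>t. moment_prod_diff n d i t p v)"
  unfolding dform_eq_sum_mlform mlform_moment_tensor moment_prod_diff_def by (rule moment_eval_sum[symmetric]) simp

lemma moment_eval_eq_0_iff:
  assumes "3 \<le> d (n - 1)" "1 \<le> n"
  shows "(\<forall>(i, k)\<in>eqs n d. moment_eval n d (i, k) (F i) = 0) \<longleftrightarrow>
         (\<forall>(i, k)\<in>eqs n d. F i (moment_root n d (i, k)) = 0)"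
proof -
  let ?a = "(n - 1, 0)" and ?b = "(n - 1, d (n - 1) - 2)"
  have ab: "?a \<in> eqs n d" "?b \<in> eqs n d" "?a \<noteq> ?b" using assms by auto
  have pair: "moment_eval n d ?a (F (n - 1)) = 0 \<and> moment_eval n d ?b (F (n - 1)) = 0 \<longleftrightarrow>
      F (n - 1) \<i> = 0 \<and> F (n - 1) (- \<i>) = 0"
    using ab(3) by (auto simp: moment_eval_def field_simps)
  have other: "moment_eval n d (i, k) (F i) = F i (moment_root n d (i, k))" if "(i, k) \<noteq> ?a" "(i, k) \<noteq> ?b" for i k
    using moment_eval_other[of "(i, k)" n d, OF that] moment_root_other[of "(i, k)" n d, OF that] by simp
  have split: "(\<forall>(i, k)\<in>eqs n d. P i k) \<longleftrightarrow>
      P (n - 1) 0 \<and> P (n - 1) (d (n - 1) - 2) \<and> (\<forall>(i, k)\<in>eqs n d - {?a, ?b}. P i k)" for P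
    using ab(1,2) by auto
  have others: "(\<forall>(i, k)\<in>eqs n d - {?a, ?b}. moment_eval n d (i, k) (F i) = 0) \<longleftrightarrow>
      (\<forall>(i, k)\<in>eqs n d - {?a, ?b}. F i (moment_root n d (i, k)) = 0)"
  proof (rule ball_cong[OF refl])
    fix q assume "q \<in> eqs n d - {?a, ?b}"
    then show "(case q of (i, k) \<Rightarrow> moment_eval n d (i, k) (F i) = 0) \<longleftrightarrow>
        (case q of (i, k) \<Rightarrow> F i (moment_root n d (i, k)) = 0)"
      using other by (cases q) auto
  qed
  have roots: "moment_root n d ?a = \<i>" "moment_root n d ?b = - \<i>"
    using ab(3) by (simp_all add: moment_root_def)
  show ?thesis
    unfolding split[of "\<lambda>i k. moment_eval n d (i, k) (F i) = 0"] split[of "\<lambda>i k. F i (moment_root n d (i, k)) = 0"]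
      roots using pair others by blast
qed

lemma inj_on_moment_root:
  assumes "3 \<le> d (n - 1)"
  shows "inj_on (moment_root n d) (eqs n d)"
proof (rule inj_onI)
  fix q q' assume q: "q \<in> eqs n d" "q' \<in> eqs n d" and eq: "moment_root n d q = moment_root n d q'"
  have "position d q = position d q' \<Longrightarrow> q = q'"
    using inj_onD[OF inj_on_position] q by blast
  moreover have "of_nat m \<noteq> \<i>" "of_nat m \<noteq> - \<i>" "\<i> \<noteq> of_nat m" "- \<i> \<noteq> of_nat m" for m
    by (auto simp: complex_eq_iff)
  moreover have "\<i> \<noteq> - \<i>" by (simp add: complex_eq_iff)
  ultimately show "q = q'"
    using eq unfolding moment_root_def by (auto split: if_splits simp del: of_nat_add)
qed

lemma in_Z_moment_tensor_iff:
  assumes "3 \<le> d (n - 1)" "1 \<le> n"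
  shows "in_Z n d (moment_tensor n d) p \<longleftrightarrow>
    is_point n d p \<and> (\<forall>(i, k)\<in>eqs n d. moment_prod n d i (moment_root n d (i, k)) p = 0)"
  using moment_eval_eq_0_iff[of d n "\<lambda>i t. moment_prod n d i t p"] assms
  by (simp add: in_Z_def mlform_moment_tensor ball_eqs_iff)

lemma dform_moment_tensor_eq_0_iff:
  assumes "3 \<le> d (n - 1)" "1 \<le> n"
  shows "(\<forall>i<n. \<forall>k<d i - 1. dform n d i (moment_tensor n d i k) p v = 0) \<longleftrightarrow>
    (\<forall>(i, k)\<in>eqs n d. moment_prod_diff n d i (moment_root n d (i, k)) p v = 0)"
  using moment_eval_eq_0_iff[of d n "\<lambda>i t. moment_prod_diff n d i t p v"] assms
  by (simp add: dform_moment_tensor ball_eqs_iff)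

lemma moment_tensor_nonreal_point:
  assumes n: "3 \<le> n" and d0: "2 \<le> d 0"
    and mono: "\<And>i. i < n \<Longrightarrow> d 0 \<le> d i" "\<And>i. i < n \<Longrightarrow> d i \<le> d (n - 1)"
    and big: "3 \<le> d (n - 1)" and sum: "d (n - 1) - 1 \<le> (\<Sum>i<n - 1. d i - 1)"
  obtains P l where "in_Z n d (moment_tensor n d) P" "l < n"
    "moment (d l) \<i> (P l) = 0" "moment (d l) (cnj \<i>) (P l) \<noteq> 0"
proof -
  let ?\<tau> = "moment_root n d"
  obtain \<sigma> where \<sigma>: "\<forall>q\<in>eqs n d. \<sigma> q < n \<and> \<sigma> q \<noteq> fst q"
      "\<forall>l<n. card {q \<in> eqs n d. \<sigma> q = l} \<le> d l - 1" "\<sigma> (n - 1, 0) \<noteq> \<sigma> (n - 1, d (n - 1) - 2)"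
    using separating_assignment[OF n d0 mono big sum] by blast
  define P where "P = (\<lambda>l. root_vec (?\<tau> ` {q \<in> eqs n d. \<sigma> q = l}))"
  have "\<forall>l<n. card {q \<in> eqs n d. \<sigma> q = l} < d l"
    using \<sigma>(2) mono(1) d0 by fastforce
  note P = point_of_assignment[where \<tau> = ?\<tau>, OF \<sigma>(1) this, folded P_def]
  have "in_Z n d (moment_tensor n d) P" using in_Z_moment_tensor_iff big n P(1,2) \<sigma>(1) by auto
  moreover define l where "l = \<sigma> (n - 1, 0)"
  moreover have l: "l < n" using \<sigma>(1) big n by (auto simp: l_def)
  moreover have "moment (d l) \<i> (P l) = 0" "moment (d l) (cnj \<i>) (P l) \<noteq> 0"
  proof -
    have ab: "(n - 1, 0) \<in> eqs n d" "(n - 1, d (n - 1) - 2) \<in> eqs n d" using big n by auto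
    have \<tau>ab: "?\<tau> (n - 1, 0) = \<i>" "?\<tau> (n - 1, d (n - 1) - 2) = - \<i>"
      using big by (simp_all add: moment_root_def)
    have "\<i> \<in> ?\<tau> ` {q \<in> eqs n d. \<sigma> q = l}"
      using ab(1) \<tau>ab(1) unfolding l_def by (metis (mono_tags, lifting) image_eqI mem_Collect_eq)
    moreover have "- \<i> \<notin> ?\<tau> ` {q \<in> eqs n d. \<sigma> q = l}"
    proof
      assume "- \<i> \<in> ?\<tau> ` {q \<in> eqs n d. \<sigma> q = l}"
      then obtain q where "q \<in> eqs n d" "\<sigma> q = l" "?\<tau> q = ?\<tau> (n - 1, d (n - 1) - 2)"
        using \<tau>ab(2) by auto
      then show False
        using inj_onD[OF inj_on_moment_root[of d n, OF big]] ab(2) \<sigma>(3) unfolding l_def by metis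
    qed
    ultimately show "moment (d l) \<i> (P l) = 0" "moment (d l) (cnj \<i>) (P l) \<noteq> 0"
      using P(3)[OF l] unfolding P_def by simp_all
  qed
  ultimately show ?thesis using that by blast
qed

lemma nonreal_pair_if_large_block:
  assumes n: "3 \<le> n" and d0: "2 \<le> d 0"
    and mono: "\<And>i. i < n \<Longrightarrow> d 0 \<le> d i" "\<And>i. i < n \<Longrightarrow> d i \<le> d (n - 1)"
    and big: "3 \<le> d (n - 1)" and sum: "d (n - 1) - 1 \<le> (\<Sum>i<n - 1. d i - 1)"
  shows "\<exists>f. reduced_dim0 n d f \<and>
           (\<exists>p q. in_Z n d f p \<and> in_Z n d f q \<and> \<not> proj_eq n d p q \<and>
                  \<not> real_point n d p \<and> \<not> real_point n d q)"
proof -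
  obtain P l where P: "in_Z n d (moment_tensor n d) P" "l < n"
    "moment (d l) \<i> (P l) = 0" "moment (d l) (cnj \<i>) (P l) \<noteq> 0"
    by (rule moment_tensor_nonreal_point[OF n d0 mono big sum])
  have "1 \<le> n" using n by simp
  note Z = in_Z_moment_tensor_iff[of d n, OF big this] and D = dform_moment_tensor_eq_0_iff[of d n, OF big this]
  have "reduced_dim0 n d (moment_tensor n d)"
    by (rule reduced_dim0_moment_system[OF inj_on_moment_root[of d n, OF big] Z D P(1)])
  then show ?thesis using conj_pair_of_block_root[OF P] by blast
qed

section \<open>Vectors in \<open>\<complex>\<^sup>2\<close> and the map \<open>turn\<close>\<close>

definition nonzero2 :: "(nat \<Rightarrow> complex) \<Rightarrow> bool" where
  "nonzero2 u \<longleftrightarrow> u 0 \<noteq> 0 \<or> u 1 \<noteq> 0"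

definition proportional :: "(nat \<Rightarrow> complex) \<Rightarrow> (nat \<Rightarrow> complex) \<Rightarrow> bool" where
  "proportional u v \<longleftrightarrow> (\<exists>c. c \<noteq> 0 \<and> u 0 = c * v 0 \<and> u 1 = c * v 1)"

definition multiple_of :: "(nat \<Rightarrow> complex) \<Rightarrow> (nat \<Rightarrow> complex) \<Rightarrow> bool" where
  "multiple_of v u \<longleftrightarrow> (\<exists>c. v 0 = c * u 0 \<and> v 1 = c * u 1)"

definition turn :: "(nat \<Rightarrow> complex) \<Rightarrow> nat \<Rightarrow> complex" where
  "turn u = (\<lambda>j. if j = 0 then u 0 - u 1 else u 0 + u 1)"

text \<open>\<open>turn_form u v = 0\<close> says that \<open>v\<close> is proportional to \<open>turn u\<close>.\<close>
definition turn_form :: "(nat \<Rightarrow> complex) \<Rightarrow> (nat \<Rightarrow> complex) \<Rightarrow> complex" where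
  "turn_form u v = (u 0 - u 1) * v 1 - (u 0 + u 1) * v 0"

definition pin_vec :: "complex \<Rightarrow> nat \<Rightarrow> complex" where
  "pin_vec t = (\<lambda>j. if j = 0 then - t else 1)"

definition eigen_vec :: "complex \<Rightarrow> nat \<Rightarrow> complex" where
  "eigen_vec e = (\<lambda>j. if j = 0 then 1 else e)"

lemma moment_2: "moment 2 t v = v 0 + t * v 1"
  by (simp add: moment_def numeral_2_eq_2)

lemma sum_diff_eq_0: "(a::complex) - b = 0 \<Longrightarrow> a + b = 0 \<Longrightarrow> a = 0 \<and> b = 0"
  by (metis eq_iff_diff_eq_0 mult_2 mult_eq_0_iff zero_neq_numeral)

lemma multiple_of_if_cross:
  assumes "nonzero2 w" "w 0 * v 1 = w 1 * v 0"
  shows "multiple_of v w"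
proof (cases "w 0 = 0")
  case True
  then have "w 1 \<noteq> 0" using assms(1) by (simp add: nonzero2_def)
  then show ?thesis using assms(2) True unfolding multiple_of_def by (intro exI[of _ "v 1 / w 1"]) auto
next
  case False
  then show ?thesis using assms(2) unfolding multiple_of_def
    by (intro exI[of _ "v 0 / w 0"]) (auto simp: field_simps)
qed

lemma multiple_of_common_kernel:
  assumes "a \<noteq> 0 \<or> b \<noteq> 0" "a * x 0 + b * x 1 = 0" "a * v 0 + b * v 1 = 0" "nonzero2 x"
  shows "multiple_of v x"
proof -
  have "x 0 * v 1 = x 1 * v 0"
  proof (cases "a = 0")
    case True
    then have "x 1 = 0" "v 1 = 0" using assms(1-3) by auto
    then show ?thesis by simp
  next
    case False
    then have "x 0 = - b * x 1 / a" "v 0 = - b * v 1 / a"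
      using assms(2,3) by (auto simp: field_simps eq_neg_iff_add_eq_0)
    then show ?thesis by simp
  qed
  then show ?thesis using multiple_of_if_cross[OF assms(4)] by simp
qed

lemma proportional_trans: "proportional u v \<Longrightarrow> proportional v w \<Longrightarrow> proportional u w"
proof -
  assume "proportional u v" "proportional v w"
  then obtain c c' where "c \<noteq> 0" "u 0 = c * v 0" "u 1 = c * v 1" "c' \<noteq> 0" "v 0 = c' * w 0" "v 1 = c' * w 1"
    unfolding proportional_def by blast
  then show "proportional u w" unfolding proportional_def by (intro exI[of _ "c * c'"]) auto
qed

lemma proportional_sym: "proportional u v \<Longrightarrow> proportional v u"
proof -
  assume "proportional u v"
  then obtain c where "c \<noteq> 0" "u 0 = c * v 0" "u 1 = c * v 1" unfolding proportional_def by blast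
  then show "proportional v u" unfolding proportional_def by (intro exI[of _ "1/c"]) auto
qed

lemma proportional_turn: "proportional u v \<Longrightarrow> proportional (turn u) (turn v)"
  unfolding proportional_def turn_def by (auto simp: algebra_simps)

lemma proportional_turn_cancel:
  assumes "proportional (turn u) (turn v)"
  shows "proportional u v"
proof -
  obtain c where c: "c \<noteq> 0" "u 0 - u 1 = c * (v 0 - v 1)" "u 0 + u 1 = c * (v 0 + v 1)"
    using assms unfolding proportional_def turn_def by auto
  have "u 0 = ((u 0 - u 1) + (u 0 + u 1)) / 2" "u 1 = ((u 0 + u 1) - (u 0 - u 1)) / 2"
    by simp_all
  then have "u 0 = c * v 0" "u 1 = c * v 1"
    unfolding c(2,3) by (simp_all add: algebra_simps)
  then show ?thesis using c(1) unfolding proportional_def by blast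
qed

lemma nonzero2_turn: "nonzero2 u \<Longrightarrow> nonzero2 (turn u)"
  unfolding nonzero2_def turn_def using sum_diff_eq_0[of "u 0" "u 1"] by auto

text \<open>As a real matrix, \<open>turn\<close> is \<open>\<surd>2\<close> times the rotation by \<open>\<pi>/4\<close>.\<close>
lemma proportional_turn_pow4: "proportional ((turn ^^ 4) u) u"
proof -
  have "(turn ^^ 4) u 0 = -4 * u 0" "(turn ^^ 4) u 1 = -4 * u 1"
    by (simp_all add: turn_def numeral_eq_Suc algebra_simps)
  then show ?thesis unfolding proportional_def by (intro exI[of _ "-4"]) simp
qed

lemma pin_form:
  assumes "moment 2 t u = 0" "nonzero2 u"
  shows "u 0 = - t * u 1" "u 1 \<noteq> 0"
proof -
  show e: "u 0 = - t * u 1" using assms(1) by (simp add: moment_2 algebra_simps eq_neg_iff_add_eq_0)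
  show "u 1 \<noteq> 0" using e assms(2) by (auto simp: nonzero2_def)
qed

lemma pin_unique: "nonzero2 u \<Longrightarrow> moment 2 s u = 0 \<Longrightarrow> moment 2 t u = 0 \<Longrightarrow> s = t"
  using pin_form[of s u] pin_form[of t u] by simp

lemma proportional_pin_vec: "moment 2 t u = 0 \<Longrightarrow> nonzero2 u \<Longrightarrow> proportional u (pin_vec t)"
  using pin_form[of t u] unfolding proportional_def pin_vec_def by (intro exI[of _ "u 1"]) auto

lemma turn_form_eq_0:
  assumes "turn_form u v = 0" "nonzero2 u" "nonzero2 v"
  shows "proportional v (turn u)"
proof -
  have "turn u 0 * v 1 = turn u 1 * v 0" using assms(1) by (simp add: turn_form_def turn_def)
  then obtain c where c: "v 0 = c * turn u 0" "v 1 = c * turn u 1"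
    using multiple_of_if_cross[OF nonzero2_turn[OF assms(2)]] unfolding multiple_of_def by blast
  then have "c \<noteq> 0" using assms(3) by (auto simp: nonzero2_def)
  then show ?thesis using c unfolding proportional_def by blast
qed

lemma turn_form_scale:
  "v 0 = c * x 0 \<Longrightarrow> v 1 = c * x 1 \<Longrightarrow> turn_form v y = c * turn_form x y"
  "v 0 = c * x 0 \<Longrightarrow> v 1 = c * x 1 \<Longrightarrow> turn_form y v = c * turn_form y x"
  by (simp_all add: turn_form_def algebra_simps)

lemma
  assumes "turn_form x y = 0" "nonzero2 x" "nonzero2 y"
  shows multiple_of_turn_kernel_fst: "turn_form v y = 0 \<Longrightarrow> multiple_of v x"
    and multiple_of_turn_kernel_snd: "turn_form x v = 0 \<Longrightarrow> multiple_of v y"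
proof -
  show "turn_form v y = 0 \<Longrightarrow> multiple_of v x"
    by (rule multiple_of_common_kernel[of "y 1 - y 0" "- (y 1 + y 0)"])
      (use assms sum_diff_eq_0[of "y 1" "y 0"] in \<open>auto simp: turn_form_def nonzero2_def algebra_simps\<close>)
  show "turn_form x v = 0 \<Longrightarrow> multiple_of v y"
    by (rule multiple_of_common_kernel[of "- (x 0 + x 1)" "x 0 - x 1"])
      (use assms sum_diff_eq_0[of "x 0" "x 1"] in \<open>auto simp: turn_form_def nonzero2_def algebra_simps\<close>)
qed

lemma multiple_of_pin_kernel:
  "moment 2 t v = 0 \<Longrightarrow> moment 2 t x = 0 \<Longrightarrow> nonzero2 x \<Longrightarrow> multiple_of v x"
  by (rule multiple_of_common_kernel[of 1 t]) (auto simp: moment_2)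

text \<open>A pin at \<open>t \<in> (0, 1)\<close> has \<open>u 0 / u 1 = -t \<in> (-1, 0)\<close>; \<open>turn\<close> maps it to a ratio
  \<open>< -1\<close> and \<open>turn\<^sup>2\<close> to a positive ratio, so no pin is one or two edges away from another.\<close>
lemma no_edge_between_pins:
  assumes "moment 2 (of_real t) u = 0" "nonzero2 u" "moment 2 (of_real t') v = 0" "nonzero2 v"
    and "turn_form u v = 0" "0 < t" "t < 1" "0 < t'" "t' < 1"
  shows False
proof -
  note pu = pin_form[OF assms(1,2)] and pv = pin_form[OF assms(3,4)]
  have "turn_form u v = u 1 * v 1 * of_real (t' * (1 - t) - t - 1)"
    unfolding turn_form_def pu(1) pv(1) by (simp add: algebra_simps)
  then have "of_real (t' * (1 - t) - t - 1) = (0::complex)" using assms(5) pu(2) pv(2) by simp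
  then have "t' * (1 - t) - t - 1 = 0" by (simp only: of_real_eq_0_iff)
  moreover have "t' * (1 - t) \<le> t' * 1" using assms by (intro mult_left_mono) auto
  ultimately show False using assms by linarith
qed

lemma no_path2_between_pins:
  assumes "moment 2 (of_real t) u = 0" "nonzero2 u" "turn_form u v = 0" "nonzero2 v"
    and "turn_form v w = 0" "moment 2 (of_real t') w = 0" "nonzero2 w" "0 < t" "0 < t'"
  shows False
proof -
  note pu = pin_form[OF assms(1,2)] and pw = pin_form[OF assms(6,7)]
  obtain c where c: "c \<noteq> 0" "v 0 = c * turn u 0" "v 1 = c * turn u 1"
    using turn_form_eq_0[OF assms(3,2,4)] unfolding proportional_def by blast
  have "turn_form v w = c * u 1 * w 1 * of_real (- 2 - 2 * t * t')"
    unfolding turn_form_def c(2,3) turn_def pu(1) pw(1) by (simp add: algebra_simps)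
  then have "of_real (- 2 - 2 * t * t') = (0::complex)" using assms(5) c(1) pu(2) pw(2) by simp
  then have "- 2 - 2 * t * t' = 0" by (simp only: of_real_eq_0_iff)
  moreover have "0 < t * t'" using assms by simp
  ultimately show False by linarith
qed

lemma edge_eigen:
  assumes "turn_form u v = 0" "nonzero2 u" "nonzero2 v" "u 1 = e * u 0" "u 0 \<noteq> 0" "e * e = -1"
  shows "v 1 = e * v 0" "v 0 \<noteq> 0"
proof -
  obtain c where c: "c \<noteq> 0" "v 0 = c * turn u 0" "v 1 = c * turn u 1"
    using turn_form_eq_0[OF assms(1,2,3)] unfolding proportional_def by blast
  have e1: "1 + e = e * (1 - e)" using assms(6) by (simp add: algebra_simps)
  have "v 1 = c * u 0 * (1 + e)" using c(3) assms(4) by (simp add: turn_def algebra_simps)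
  also have "\<dots> = e * (c * u 0 * (1 - e))" using e1 by simp
  also have "c * u 0 * (1 - e) = v 0" using c(2) assms(4) by (simp add: turn_def algebra_simps)
  finally show "v 1 = e * v 0" .
  have "e \<noteq> 1" using assms(6) by auto
  then show "v 0 \<noteq> 0" using c(1,2) assms(4,5) by (simp add: turn_def)
qed

text \<open>The eigenvectors of \<open>turn\<^sup>3\<close> are \<open>(1, \<plusminus>\<i>)\<close>: around a triangle of edges all three
  factors equal the same one of them.\<close>
lemma turn_triangle:
  assumes "turn_form u v = 0" "turn_form v w = 0" "turn_form w u = 0"
    and "nonzero2 u" "nonzero2 v" "nonzero2 w"
  shows "\<exists>e. e * e = -1 \<and> u 1 = e * u 0 \<and> u 0 \<noteq> 0 \<and> v 1 = e * v 0 \<and> v 0 \<noteq> 0 \<and>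
           w 1 = e * w 0 \<and> w 0 \<noteq> 0"
proof -
  have "proportional u (turn (turn (turn u)))"
    using turn_form_eq_0[OF assms(3,6,4)] turn_form_eq_0[OF assms(2,5,6)] turn_form_eq_0[OF assms(1,4,5)]
    by (meson proportional_trans proportional_turn)
  then obtain K where "K \<noteq> 0" "u 0 = K * turn (turn (turn u)) 0" "u 1 = K * turn (turn (turn u)) 1"
    unfolding proportional_def by blast
  moreover have "turn (turn (turn u)) 0 = - 2 * u 0 - 2 * u 1" "turn (turn (turn u)) 1 = 2 * u 0 - 2 * u 1"
    by (simp_all add: turn_def)
  ultimately have K: "K \<noteq> 0" "u 0 = K * (- 2 * u 0 - 2 * u 1)" "u 1 = K * (2 * u 0 - 2 * u 1)"
    by simp_all
  have "K * (2 * (u 0 * u 0 + u 1 * u 1)) = u 0 * u 1 - u 0 * u 1"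
    by (subst (1) K(2), subst (2) K(3)) (simp add: algebra_simps)
  then have "2 * (u 0 * u 0 + u 1 * u 1) = 0" using K(1) mult_eq_0_iff by simp
  then have sq: "u 0 * u 0 + u 1 * u 1 = 0" by (simp only: mult_eq_0_iff) simp
  have u0: "u 0 \<noteq> 0" using sq assms(4) by (auto simp: nonzero2_def)
  define e where "e = u 1 / u 0"
  have ue: "u 1 = e * u 0" using u0 by (simp add: e_def)
  have ee: "e * e = -1" using sq u0 unfolding e_def by (simp add: field_simps eq_neg_iff_add_eq_0)
  note ev = edge_eigen[OF assms(1,4,5) ue u0 ee]
  note ew = edge_eigen[OF assms(2,5,6) ev ee]
  show ?thesis using ue u0 ee ev ew by blast
qed

lemma turn_triangle_unpinned:
  assumes "turn_form u v = 0" "turn_form v w = 0" "turn_form w u = 0"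
    and "nonzero2 u" "nonzero2 v" "nonzero2 w" "moment 2 (of_real t) u = 0"
  shows False
proof -
  obtain e where e: "e * e = -1" "u 1 = e * u 0" "u 0 \<noteq> 0"
    using turn_triangle[OF assms(1-6)] by blast
  have "u 0 = - of_real t * u 1" by (rule pin_form(1)[OF assms(7,4)])
  also have "\<dots> = - of_real t * e * u 0" using e(2) by simp
  finally have "u 0 + of_real t * e * u 0 = 0" by (metis eq_neg_iff_add_eq_0 mult_minus_left)
  then have "(1 + of_real t * e) * u 0 = 0" by (simp add: distrib_right)
  then have "of_real t * e = -1" using e(3) by (simp add: eq_neg_iff_add_eq_0 add.commute)
  then have "of_real t * e * (of_real t * e) = (1::complex)" by simp
  moreover have "of_real t * e * (of_real t * e) = of_real t * of_real t * (e * e)"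
    by (simp only: ac_simps)
  ultimately have "of_real (- (t * t)) = (1::complex)" using e(1) by simp
  then have "- (t * t) = 1" by (simp only: of_real_eq_1_iff)
  moreover have "0 \<le> t * t" by simp
  ultimately show False by linarith
qed

lemma square_minus_one_mult: "e * e = -1 \<Longrightarrow> e * (e * X) = - (X::complex)"
  by (metis mult.assoc mult_minus1)

lemma turn_form_eigen:
  assumes "x 1 = e * x 0" "e * e = -1"
  shows "turn_form v x = - (1 + e) * x 0 * (v 1 - e * v 0)"
    and "turn_form x v = (1 - e) * x 0 * (v 1 - e * v 0)"
proof -
  note eeX = square_minus_one_mult[OF assms(2)]
  show "turn_form v x = - (1 + e) * x 0 * (v 1 - e * v 0)"
    unfolding turn_form_def assms(1) by (simp add: algebra_simps eeX)
  show "turn_form x v = (1 - e) * x 0 * (v 1 - e * v 0)"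
    unfolding turn_form_def assms(1) by (simp add: algebra_simps eeX)
qed

text \<open>The linearised triangle equations at the eigenvector point \<open>(1, e)\<close> force the deviations
  \<open>s\<^sub>k = v\<^sub>k 1 - e v\<^sub>k 0\<close> to be multiplied by \<open>e\<close> around the triangle, and \<open>e\<^sup>3 \<noteq> 1\<close>.\<close>
lemma triangle_tangent:
  fixes e a0 a1 a2 s0 s1 s2 :: complex
  assumes ee: "e * e = -1" and a: "a0 \<noteq> 0" "a1 \<noteq> 0" "a2 \<noteq> 0"
    and E01: "- (1 + e) * a1 * s0 + (1 - e) * a0 * s1 = 0"
    and E12: "- (1 + e) * a2 * s1 + (1 - e) * a1 * s2 = 0"
    and E20: "- (1 + e) * a0 * s2 + (1 - e) * a2 * s0 = 0"
  shows "s0 = 0 \<and> s1 = 0 \<and> s2 = 0"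
proof -
  note eeX = square_minus_one_mult[OF ee]
  have ne: "1 - e \<noteq> 0" "1 + e \<noteq> 0"
  proof
    assume "1 - e = 0"
    then have "e = 1" by simp
    then show False using ee by simp
  next
    show "1 + e \<noteq> 0"
    proof
      assume "1 + e = 0"
      then have "e = -1" by (simp add: eq_neg_iff_add_eq_0 add.commute)
      then show False using ee by simp
    qed
  qed
  have step: "A * S' = e * B * S" if "- (1 + e) * B * S + (1 - e) * A * S' = 0" for A B S S'
  proof -
    have "(1 - e) * (A * S' - e * B * S) = - (1 + e) * B * S + (1 - e) * A * S'"
      using ee by (simp add: algebra_simps eeX)
    then show ?thesis using that ne(1) by simp
  qed
  have f01: "a0 * s1 = e * a1 * s0" by (rule step[OF E01])
  have f12: "a1 * s2 = e * a2 * s1" by (rule step[OF E12])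
  have f20: "a2 * s0 = e * a0 * s2" by (rule step[OF E20])
  define P where "P = a0 * a1 * (a2 * s0)"
  have "P = a0 * a1 * (e * a0 * s2)" using f20 unfolding P_def by simp
  also have "\<dots> = e * a0 * a0 * (a1 * s2)" by (simp add: algebra_simps)
  also have "\<dots> = e * a0 * a0 * (e * a2 * s1)" using f12 by simp
  also have "\<dots> = (e * e) * a0 * a2 * (a0 * s1)" by (simp add: algebra_simps)
  also have "\<dots> = (e * e) * a0 * a2 * (e * a1 * s0)" using f01 by simp
  also have "\<dots> = - e * P" unfolding P_def using ee by (simp add: algebra_simps eeX)
  finally have PP: "P = - e * P" .
  have "(1 + e) * P = P - (- e * P)" by (simp add: algebra_simps)
  also have "\<dots> = 0" unfolding PP[symmetric] by simp
  finally have "(1 + e) * P = 0" .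
  then have "s0 = 0" using ne(2) a unfolding P_def by simp
  then show ?thesis using f01 f12 a by simp
qed

lemma multiple_of_edge:
  assumes "turn_form xa xb = 0" "turn_form va xb + turn_form xa vb = 0" "nonzero2 xa" "nonzero2 xb"
  shows "multiple_of va xa \<longleftrightarrow> multiple_of vb xb"
proof
  assume "multiple_of va xa"
  then obtain c where "va 0 = c * xa 0" "va 1 = c * xa 1" unfolding multiple_of_def by blast
  then have "turn_form xa vb = 0" using turn_form_scale(1) assms(1,2) by simp
  then show "multiple_of vb xb" using multiple_of_turn_kernel_snd[OF assms(1,3,4)] by blast
next
  assume "multiple_of vb xb"
  then obtain c where "vb 0 = c * xb 0" "vb 1 = c * xb 1" unfolding multiple_of_def by blast
  then have "turn_form va xb = 0" using turn_form_scale(2) assms(1,2) by simp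
  then show "multiple_of va xa" using multiple_of_turn_kernel_fst[OF assms(1,3,4)] by blast
qed

lemma square_eq_minus_one: "(e::complex) * e = -1 \<Longrightarrow> e = \<i> \<or> e = - \<i>"
proof -
  assume "e * e = -1"
  then have "(e - \<i>) * (e + \<i>) = 0" by (simp add: algebra_simps)
  then show ?thesis by (auto simp: eq_neg_iff_add_eq_0)
qed

text \<open>Triangle \<open>0 \<rightarrow> 1 \<rightarrow> 2 \<rightarrow> 0\<close>: \<open>w\<^sub>a\<close> says factor \<open>a\<close> is pinned, \<open>e\<^sub>a\<close> that the edge leaving
  \<open>a\<close> vanishes.  The excluded patterns are those of \<open>no_edge_between_pins\<close>,
  \<open>no_path2_between_pins\<close> and \<open>turn_triangle_unpinned\<close>.\<close>
lemma triangle_count_le: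
  assumes "\<not> (e0 \<and> w0 \<and> w1)" "\<not> (e1 \<and> w1 \<and> w2)" "\<not> (e2 \<and> w2 \<and> w0)"
    "\<not> (e0 \<and> e1 \<and> w0 \<and> w2)" "\<not> (e1 \<and> e2 \<and> w1 \<and> w0)" "\<not> (e2 \<and> e0 \<and> w2 \<and> w1)"
    "\<not> (e0 \<and> e1 \<and> e2 \<and> (w0 \<or> w1 \<or> w2))"
  shows "of_bool w0 + of_bool w1 + of_bool w2 + of_bool e0 + of_bool e1 + of_bool e2 \<le> (3::nat)"
  using assms by (cases w0; cases w1; cases w2; cases e0; cases e1; cases e2) auto

text \<open>With exactly three of the six events and not the full triangle, every factor is joined by
  edges to a pinned one, so any property of pinned factors that edges propagate holds for all.\<close>
lemma triangle_closure:
  assumes "of_bool w0 + of_bool w1 + of_bool w2 + of_bool e0 + of_bool e1 + of_bool e2 = (3::nat)"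
    "\<not> (e0 \<and> e1 \<and> e2)" "\<not> (e0 \<and> w0 \<and> w1)" "\<not> (e1 \<and> w1 \<and> w2)" "\<not> (e2 \<and> w2 \<and> w0)"
    and "w0 \<Longrightarrow> G0" "w1 \<Longrightarrow> G1" "w2 \<Longrightarrow> G2"
    "e0 \<Longrightarrow> G0 \<longleftrightarrow> G1" "e1 \<Longrightarrow> G1 \<longleftrightarrow> G2" "e2 \<Longrightarrow> G2 \<longleftrightarrow> G0"
  shows "G0 \<and> G1 \<and> G2"
proof -
  have "(w0 \<and> w1 \<and> w2) \<or> (e0 \<and> w2 \<and> (w0 \<or> w1)) \<or> (e1 \<and> w0 \<and> (w1 \<or> w2)) \<or>
      (e2 \<and> w1 \<and> (w2 \<or> w0)) \<or> (((e0 \<and> e1) \<or> (e1 \<and> e2) \<or> (e2 \<and> e0)) \<and> (w0 \<or> w1 \<or> w2))"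
    using assms(1-5) by (cases e0; cases e1; cases e2; cases w0; cases w1; cases w2) simp_all
  then show ?thesis using assms(6-11) by blast
qed

section \<open>The case \<open>d = 2\<close>\<close>

definition pin_val :: "nat \<Rightarrow> real" where
  "pin_val q = 1 / (real q + 2)"

abbreviation pin_root :: "nat \<Rightarrow> complex" where
  "pin_root q \<equiv> complex_of_real (pin_val q)"

definition edge_src :: "nat \<Rightarrow> nat" where
  "edge_src q = (if q = 0 then 1 else if q = 1 then 2 else 0)"

definition edge_dst :: "nat \<Rightarrow> nat" where
  "edge_dst q = (if q = 0 then 2 else if q = 1 then 0 else 1)"

definition is_edge_eq :: "nat \<Rightarrow> nat \<Rightarrow> bool" where
  "is_edge_eq n q \<longleftrightarrow> q = 0 \<or> q = 1 \<or> q = n - 1"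

definition pinned :: "nat \<Rightarrow> nat \<Rightarrow> nat set" where
  "pinned n q = (if is_edge_eq n q then {0..<n} - {q, edge_src q, edge_dst q} else {0..<n} - {q})"

text \<open>The equations of the case \<open>d = 2\<close>: the equations \<open>0\<close>, \<open>1\<close> and \<open>n - 1\<close> contain the edge
  forms \<open>1 \<rightarrow> 2\<close>, \<open>2 \<rightarrow> 0\<close> and \<open>0 \<rightarrow> 1\<close> of a triangle; every other factor \<open>l\<close> of the equation \<open>q\<close>
  enters through the linear form vanishing at the pin \<open>pin_vec (pin_root q)\<close>.\<close>
definition edge_part :: "nat \<Rightarrow> nat \<Rightarrow> (nat \<Rightarrow> nat \<Rightarrow> complex) \<Rightarrow> complex" where
  "edge_part n q y = (if is_edge_eq n q then turn_form (y (edge_src q)) (y (edge_dst q)) else 1)"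

definition pin_part :: "nat \<Rightarrow> nat \<Rightarrow> (nat \<Rightarrow> nat \<Rightarrow> complex) \<Rightarrow> complex" where
  "pin_part n q y = (\<Prod>l\<in>pinned n q. moment 2 (pin_root q) (y l))"

text \<open>The coefficients of \<open>turn_form\<close>.\<close>
definition turn_coeff :: "nat \<Rightarrow> nat \<Rightarrow> real" where
  "turn_coeff r s = (if r = 0 \<and> s = 1 then 1 else if r < 2 \<and> s < 2 then -1 else 0)"

definition edge_tensor :: "nat \<Rightarrow> nat \<Rightarrow> nat \<Rightarrow> nat \<Rightarrow> nat \<Rightarrow> real" where
  "edge_tensor q r s l j = (if l = edge_src q then of_bool (j = r)
     else if l = edge_dst q then of_bool (j = s) else pin_val q ^ j)"

definition triangle_tensor :: "nat \<Rightarrow> nat \<Rightarrow> (nat \<Rightarrow> nat) \<Rightarrow> real" where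
  "triangle_tensor n q J = (if is_edge_eq n q
     then (\<Sum>r<2. \<Sum>s<2. turn_coeff r s * (\<Prod>l\<in>{0..<n} - {q}. edge_tensor q r s l (J l)))
     else pin_val q ^ (\<Sum>l\<in>{0..<n} - {q}. J l))"

lemma edge_eq_facts:
  assumes "3 \<le> n" "q < n" "is_edge_eq n q"
  shows "edge_src q < n" "edge_dst q < n" "edge_src q \<noteq> q" "edge_dst q \<noteq> q" "edge_src q \<noteq> edge_dst q"
    and "{0..<n} - {q} = insert (edge_src q) (insert (edge_dst q) (pinned n q))"
    and "edge_src q \<notin> pinned n q" "edge_dst q \<notin> pinned n q"
  using assms by (auto simp: edge_src_def edge_dst_def is_edge_eq_def pinned_def)

lemma finite_pinned [simp]: "finite (pinned n q)"
  by (simp add: pinned_def)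

lemma pinned_subset: "pinned n q \<subseteq> {0..<n} - {q}"
  by (auto simp: pinned_def)

lemma mlform_triangle_tensor:
  assumes n: "3 \<le> n" and q: "q < n" and d: "\<And>l. l < n \<Longrightarrow> d l = 2"
  shows "mlform n d q (triangle_tensor n q) y = edge_part n q y * pin_part n q y"
proof (cases "is_edge_eq n q")
  case True
  note e = edge_eq_facts[OF n q True]
  let ?I = "{0..<n} - {q}"
  have factor: "(\<Prod>l\<in>?I. \<Sum>j<d l. complex_of_real (edge_tensor q r s l j) * y l j)
      = y (edge_src q) r * y (edge_dst q) s * pin_part n q y" if "r < 2" "s < 2" for r s
  proof -
    have "(\<Sum>j<d l. complex_of_real (edge_tensor q r s l j) * y l j) = moment 2 (pin_root q) (y l)"
      if "l \<in> pinned n q" for l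
    proof -
      have "l < n" "l \<noteq> edge_src q" "l \<noteq> edge_dst q" using that pinned_subset[of n q] e(7,8) by auto
      then show ?thesis by (simp add: edge_tensor_def moment_def d)
    qed
    moreover have "(\<Sum>j<d (edge_src q). complex_of_real (edge_tensor q r s (edge_src q) j) * y (edge_src q) j)
        = y (edge_src q) r"
      using that d[OF e(1)] by (auto simp: edge_tensor_def numeral_2_eq_2 lessThan_Suc less_Suc_eq)
    moreover have "(\<Sum>j<d (edge_dst q). complex_of_real (edge_tensor q r s (edge_dst q) j) * y (edge_dst q) j)
        = y (edge_dst q) s"
      using that d[OF e(2)] e(5) by (auto simp: edge_tensor_def numeral_2_eq_2 lessThan_Suc less_Suc_eq)
    ultimately show ?thesis
      unfolding e(6) pin_part_def using e(5,7,8) by (simp add: mult.assoc)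
  qed
  have "mlform n d q (triangle_tensor n q) y = cmlform n d q (\<lambda>J. \<Sum>r<2. \<Sum>s<2.
      complex_of_real (turn_coeff r s) * (\<Prod>l\<in>?I. complex_of_real (edge_tensor q r s l (J l)))) y"
    unfolding mlform_eq_cmlform by (rule cmlform_cong) (simp add: triangle_tensor_def True)
  also have "\<dots> = (\<Sum>r<2. \<Sum>s<2. complex_of_real (turn_coeff r s) *
      (y (edge_src q) r * y (edge_dst q) s * pin_part n q y))"
    using cmlform_prod_tensor[of n d q "\<lambda>l j. complex_of_real (edge_tensor q _ _ l j)" y] factor
    by (simp add: cmlform_sum cmlform_scale)
  also have "\<dots> = edge_part n q y * pin_part n q y"
    using True by (simp add: edge_part_def turn_form_def turn_coeff_def numeral_2_eq_2 algebra_simps)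
  finally show ?thesis .
next
  case False
  have "triangle_tensor n q = (\<lambda>J. pin_val q ^ (\<Sum>l\<in>{0..<n} - {q}. J l))"
    by (rule ext) (simp add: triangle_tensor_def False)
  then have "mlform n d q (triangle_tensor n q) y = moment_prod n d q (pin_root q) y"
    by (simp add: mlform_real_power)
  also have "\<dots> = pin_part n q y"
    unfolding moment_prod_def pin_part_def using False d by (intro prod.cong) (auto simp: pinned_def)
  finally show ?thesis using False by (simp add: edge_part_def)
qed

lemma pin_val_bounds: "0 < pin_val q" "pin_val q < 1"
  by (simp_all add: pin_val_def)

lemma pin_val_inj: "pin_val q = pin_val q' \<Longrightarrow> q = q'"
  by (simp add: pin_val_def)

text \<open>Since \<open>turn\<^sup>4\<close> is a multiple of the identity, four powers keep this set closed under
  \<open>turn\<close> and its inverse.\<close>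
definition candidate :: "nat \<Rightarrow> (nat \<Rightarrow> complex) \<Rightarrow> bool" where
  "candidate n u \<longleftrightarrow> (\<exists>k<4. \<exists>q<n. proportional u ((turn ^^ k) (pin_vec (pin_root q))))"

lemma candidate_edge:
  assumes "turn_form u v = 0" "nonzero2 u" "nonzero2 v"
  shows "candidate n u \<longleftrightarrow> candidate n v"
proof
  have e: "proportional v (turn u)" by (rule turn_form_eq_0[OF assms])
  assume "candidate n u"
  then obtain k q where kq: "k < 4" "q < n" "proportional u ((turn ^^ k) (pin_vec (pin_root q)))"
    unfolding candidate_def by blast
  then have A: "proportional v ((turn ^^ Suc k) (pin_vec (pin_root q)))"
    using e proportional_turn[OF kq(3)] proportional_trans by simp
  show "candidate n v"
  proof (cases "k = 3")
    case True
    then have "proportional v ((turn ^^ 0) (pin_vec (pin_root q)))"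
      using A proportional_turn_pow4 proportional_trans by (simp add: numeral_eq_Suc)
    then show ?thesis unfolding candidate_def using kq(2) by (intro exI[of _ 0]) auto
  next
    case False
    then show ?thesis unfolding candidate_def using kq A by (intro exI[of _ "Suc k"]) auto
  qed
next
  have e: "proportional v (turn u)" by (rule turn_form_eq_0[OF assms])
  assume "candidate n v"
  then obtain k q where kq: "k < 4" "q < n" "proportional v ((turn ^^ k) (pin_vec (pin_root q)))"
    unfolding candidate_def by blast
  have m: "proportional (turn u) ((turn ^^ k) (pin_vec (pin_root q)))"
    using proportional_sym[OF e] kq(3) proportional_trans by blast
  show "candidate n u"
  proof (cases k)
    case 0
    have "proportional (turn u) (turn ((turn ^^ 3) (pin_vec (pin_root q))))"
      using m 0 proportional_sym[OF proportional_turn_pow4] proportional_trans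
      by (simp add: numeral_eq_Suc)
    then have "proportional u ((turn ^^ 3) (pin_vec (pin_root q)))" by (rule proportional_turn_cancel)
    then show ?thesis unfolding candidate_def using kq(2) by (intro exI[of _ 3]) auto
  next
    case (Suc k')
    then have "proportional u ((turn ^^ k') (pin_vec (pin_root q)))"
      using m by (simp add: proportional_turn_cancel)
    then show ?thesis unfolding candidate_def using kq Suc by (intro exI[of _ k']) auto
  qed
qed

lemma finite_candidates:
  "finite {u. \<exists>k<4. \<exists>q<n. u = (turn ^^ k) (pin_vec (pin_root q))}"
proof -
  have "{u. \<exists>k<4. \<exists>q<n. u = (turn ^^ k) (pin_vec (pin_root q))}
      = (\<lambda>(k, q). (turn ^^ k) (pin_vec (pin_root q))) ` ({..<4} \<times> {..<n})"
    by auto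
  then show ?thesis by simp
qed

lemma pin_part_upd_out: "m \<notin> pinned n q \<Longrightarrow> pin_part n q (x(m := u)) = pin_part n q x"
  unfolding pin_part_def by (rule prod.cong) auto

lemma pin_part_upd_in:
  "m \<in> pinned n q \<Longrightarrow>
    pin_part n q (x(m := u)) = moment 2 (pin_root q) u * (\<Prod>l\<in>pinned n q - {m}. moment 2 (pin_root q) (x l))"
  unfolding pin_part_def by (subst prod.remove[of _ m]) (auto intro!: prod.cong)

lemma pin_part_upd_eq_0:
  assumes "l \<in> pinned n q" "moment 2 (pin_root q) (x l) = 0" "m \<noteq> l"
  shows "pin_part n q (x(m := u)) = 0"
  unfolding pin_part_def by (rule prod_zero, simp, rule bexI[of _ l]) (use assms in auto)

lemma edge_part_upd_out:
  "(is_edge_eq n q \<longrightarrow> m \<noteq> edge_src q \<and> m \<noteq> edge_dst q) \<Longrightarrow> edge_part n q (x(m := u)) = edge_part n q x"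
  unfolding edge_part_def by auto

definition triangle_eq_diff :: "nat \<Rightarrow> nat \<Rightarrow> (nat \<Rightarrow> nat \<Rightarrow> complex) \<Rightarrow> (nat \<Rightarrow> nat \<Rightarrow> complex) \<Rightarrow> complex" where
  "triangle_eq_diff n q x v = (\<Sum>m\<in>{0..<n} - {q}. edge_part n q (x(m := v m)) * pin_part n q (x(m := v m)))"

lemma triangle_eq_diff_pin:
  assumes "l \<in> pinned n q" "moment 2 (pin_root q) (x l) = 0" "edge_part n q x \<noteq> 0"
    and "(\<Prod>l'\<in>pinned n q - {l}. moment 2 (pin_root q) (x l')) \<noteq> 0" "triangle_eq_diff n q x v = 0"
  shows "moment 2 (pin_root q) (v l) = 0"
proof -
  have l: "l \<in> {0..<n} - {q}" "is_edge_eq n q \<longrightarrow> l \<noteq> edge_src q \<and> l \<noteq> edge_dst q"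
    using assms(1) pinned_subset[of n q] by (blast, auto simp: pinned_def)
  have "triangle_eq_diff n q x v = edge_part n q (x(l := v l)) * pin_part n q (x(l := v l))"
    unfolding triangle_eq_diff_def using l(1) pin_part_upd_eq_0[of l n q x, OF assms(1,2)] by (subst sum.remove[of _ l]) auto
  also have "\<dots> = edge_part n q x * (moment 2 (pin_root q) (v l) *
      (\<Prod>l'\<in>pinned n q - {l}. moment 2 (pin_root q) (x l')))"
    using edge_part_upd_out[OF l(2)] pin_part_upd_in[OF assms(1)] by simp
  finally show ?thesis using assms(3-5) by simp
qed

lemma triangle_eq_diff_edge:
  assumes n: "3 \<le> n" and q: "q < n" "is_edge_eq n q" and "edge_part n q x = 0" "pin_part n q x \<noteq> 0"
    and "triangle_eq_diff n q x v = 0"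
  shows "turn_form (v (edge_src q)) (x (edge_dst q)) + turn_form (x (edge_src q)) (v (edge_dst q)) = 0"
proof -
  note e = edge_eq_facts[OF n q]
  have "(\<Sum>m\<in>pinned n q. edge_part n q (x(m := v m)) * pin_part n q (x(m := v m))) = 0"
  proof (rule sum.neutral, rule ballI)
    fix m assume "m \<in> pinned n q"
    then have "m \<noteq> edge_src q" "m \<noteq> edge_dst q" using e(7,8) by auto
    then have "edge_part n q (x(m := v m)) = 0" using edge_part_upd_out[of n q m x "v m"] assms(4) by simp
    then show "edge_part n q (x(m := v m)) * pin_part n q (x(m := v m)) = 0" by simp
  qed
  then have "triangle_eq_diff n q x v = edge_part n q (x(edge_src q := v (edge_src q))) * pin_part n q x
      + edge_part n q (x(edge_dst q := v (edge_dst q))) * pin_part n q x"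
    unfolding triangle_eq_diff_def e(6) using e(5,7,8) pin_part_upd_out[OF e(7)] pin_part_upd_out[OF e(8)]
    by simp
  also have "\<dots> = (turn_form (v (edge_src q)) (x (edge_dst q)) + turn_form (x (edge_src q)) (v (edge_dst q)))
      * pin_part n q x"
    using e(5) q(2) by (simp add: edge_part_def algebra_simps)
  finally show ?thesis using assms(5,6) by simp
qed

locale triangle_solution =
  fixes n :: nat and x :: "nat \<Rightarrow> nat \<Rightarrow> complex"
  assumes n: "3 \<le> n" and nonzero: "\<And>l. l < n \<Longrightarrow> nonzero2 (x l)"
    and solves: "\<And>q. q < n \<Longrightarrow> edge_part n q x * pin_part n q x = 0"
begin

definition pins :: "nat \<Rightarrow> nat set" where
  "pins l = {q \<in> {..<n}. l \<in> pinned n q \<and> moment 2 (pin_root q) (x l) = 0}"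

definition edges :: "nat set" where
  "edges = {q \<in> {..<n}. is_edge_eq n q \<and> edge_part n q x = 0}"

abbreviation triangle_count :: nat where
  "triangle_count \<equiv> of_bool (pins 0 \<noteq> {}) + of_bool (pins 1 \<noteq> {}) + of_bool (pins 2 \<noteq> {})
     + of_bool (turn_form (x 0) (x 1) = 0) + of_bool (turn_form (x 1) (x 2) = 0)
     + of_bool (turn_form (x 2) (x 0) = 0)"

lemma card_pins_le: "l < n \<Longrightarrow> card (pins l) \<le> 1"
proof -
  assume "l < n"
  have "a = b" if "a \<in> pins l" "b \<in> pins l" for a b
  proof -
    from that have "moment 2 (pin_root a) (x l) = 0" "moment 2 (pin_root b) (x l) = 0"
      by (auto simp: pins_def)
    then have "pin_root a = pin_root b" by (rule pin_unique[OF nonzero[OF \<open>l < n\<close>]])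
    then show ?thesis using pin_val_inj by simp
  qed
  then show ?thesis using card_le_Suc0_iff_eq[of "pins l"] by (simp add: pins_def)
qed

lemma eqs_covered: "q < n \<Longrightarrow> q \<in> edges \<or> (\<exists>l<n. q \<in> pins l)"
proof (cases "edge_part n q x = 0")
  case True
  then have "is_edge_eq n q" by (auto simp: edge_part_def split: if_splits)
  then show "q < n \<Longrightarrow> ?thesis" using True by (simp add: edges_def)
next
  case False
  assume "q < n"
  then have "pin_part n q x = 0" using solves[OF \<open>q < n\<close>] False by simp
  then obtain l where "l \<in> pinned n q" "moment 2 (pin_root q) (x l) = 0"
    unfolding pin_part_def by (auto simp: prod_zero_iff)
  then show ?thesis using \<open>q < n\<close> pinned_subset[of n q] by (auto simp: pins_def)
qed

lemma card_filter_3: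
  assumes "a \<noteq> b" "a \<noteq> c" "b \<noteq> c"
  shows "card {q \<in> {a, b, c}. P q} = of_bool (P a) + of_bool (P b) + of_bool (P c)"
proof -
  have "(\<Sum>q\<in>{a, b, c}. if P q then 1 else 0) = card {q \<in> {a, b, c}. P q}"
    by (subst sum.inter_filter[symmetric]) simp_all
  then show ?thesis using assms by (simp add: of_bool_def add.assoc)
qed

lemma card_edges: "card edges = of_bool (turn_form (x 0) (x 1) = 0) + of_bool (turn_form (x 1) (x 2) = 0)
    + of_bool (turn_form (x 2) (x 0) = 0)"
proof -
  have ne: "n - 1 \<noteq> 0" "n - 1 \<noteq> 1" using n by auto
  have "edges = {q \<in> {n - 1, 0, 1}. edge_part n q x = 0}"
    using n by (auto simp: edges_def is_edge_eq_def)
  then have "card edges = of_bool (edge_part n (n - 1) x = 0) + of_bool (edge_part n 0 x = 0)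
      + of_bool (edge_part n 1 x = 0)"
    using card_filter_3[OF ne(1,2)] by simp
  moreover have "edge_part n (n - 1) x = turn_form (x 0) (x 1)" "edge_part n 0 x = turn_form (x 1) (x 2)"
    "edge_part n 1 x = turn_form (x 2) (x 0)"
    using ne by (simp_all add: edge_part_def is_edge_eq_def edge_src_def edge_dst_def)
  ultimately show ?thesis by simp
qed

lemma pinned_factor:
  assumes "pins a \<noteq> {}"
  obtains t where "moment 2 (of_real t) (x a) = 0" "0 < t" "t < 1"
  using assms pin_val_bounds by (auto simp: pins_def)

lemma pinned_edge_free:
  assumes "a < n" "b < n" "turn_form (x a) (x b) = 0" "pins a \<noteq> {}" "pins b \<noteq> {}"
  shows False
proof -
  obtain t where t: "moment 2 (of_real t) (x a) = 0" "0 < t" "t < 1"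
    using assms(4) by (rule pinned_factor)
  obtain t' where t': "moment 2 (of_real t') (x b) = 0" "0 < t'" "t' < 1"
    using assms(5) by (rule pinned_factor)
  show False
    using no_edge_between_pins[OF t(1) nonzero[OF assms(1)] t'(1) nonzero[OF assms(2)] assms(3) t(2,3) t'(2,3)] .
qed

lemma pinned_path2_free:
  assumes "a < n" "b < n" "c < n" "turn_form (x a) (x b) = 0" "turn_form (x b) (x c) = 0"
    "pins a \<noteq> {}" "pins c \<noteq> {}"
  shows False
proof -
  obtain t where t: "moment 2 (of_real t) (x a) = 0" "0 < t"
    using assms(6) by (rule pinned_factor)
  obtain t' where t': "moment 2 (of_real t') (x c) = 0" "0 < t'"
    using assms(7) by (rule pinned_factor)
  show False
    using no_path2_between_pins[OF t(1) nonzero[OF assms(1)] assms(4) nonzero[OF assms(2)] assms(5) t'(1)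
        nonzero[OF assms(3)] t(2) t'(2)] .
qed

lemma pinned_triangle_free:
  assumes "a < n" "b < n" "c < n" "turn_form (x a) (x b) = 0" "turn_form (x b) (x c) = 0"
    "turn_form (x c) (x a) = 0" "pins a \<noteq> {}"
  shows False
proof -
  obtain t where "moment 2 (of_real t) (x a) = 0"
    using assms(7) by (rule pinned_factor)
  then show False
    using turn_triangle_unpinned[OF assms(4-6) nonzero[OF assms(1)] nonzero[OF assms(2)] nonzero[OF assms(3)]]
    by blast
qed

lemma triangle_count_le_3: "triangle_count \<le> 3"
proof -
  have n3: "0 < n" "1 < n" "2 < n" using n by auto
  show ?thesis
  proof (rule triangle_count_le)
    show "\<not> (turn_form (x 0) (x 1) = 0 \<and> pins 0 \<noteq> {} \<and> pins 1 \<noteq> {})"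
      using pinned_edge_free[OF n3(1,2)] by blast
    show "\<not> (turn_form (x 1) (x 2) = 0 \<and> pins 1 \<noteq> {} \<and> pins 2 \<noteq> {})"
      using pinned_edge_free[OF n3(2,3)] by blast
    show "\<not> (turn_form (x 2) (x 0) = 0 \<and> pins 2 \<noteq> {} \<and> pins 0 \<noteq> {})"
      using pinned_edge_free[OF n3(3,1)] by blast
    show "\<not> (turn_form (x 0) (x 1) = 0 \<and> turn_form (x 1) (x 2) = 0 \<and> pins 0 \<noteq> {} \<and> pins 2 \<noteq> {})"
      using pinned_path2_free[OF n3(1,2,3)] by blast
    show "\<not> (turn_form (x 1) (x 2) = 0 \<and> turn_form (x 2) (x 0) = 0 \<and> pins 1 \<noteq> {} \<and> pins 0 \<noteq> {})"
      using pinned_path2_free[OF n3(2,3,1)] by blast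
    show "\<not> (turn_form (x 2) (x 0) = 0 \<and> turn_form (x 0) (x 1) = 0 \<and> pins 2 \<noteq> {} \<and> pins 1 \<noteq> {})"
      using pinned_path2_free[OF n3(3,1,2)] by blast
    show "\<not> (turn_form (x 0) (x 1) = 0 \<and> turn_form (x 1) (x 2) = 0 \<and> turn_form (x 2) (x 0) = 0 \<and>
        (pins 0 \<noteq> {} \<or> pins 1 \<noteq> {} \<or> pins 2 \<noteq> {}))"
      using pinned_triangle_free[OF n3(1,2,3)] pinned_triangle_free[OF n3(2,3,1)]
        pinned_triangle_free[OF n3(3,1,2)] by blast
  qed
qed

lemma pins_subset: "pins l \<subseteq> {..<n}" and pins_empty: "n \<le> l \<Longrightarrow> pins l = {}"
  using pinned_subset by (fastforce simp: pins_def)+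

lemma card_pins: "l < n \<Longrightarrow> card (pins l) = of_bool (pins l \<noteq> {})"
  using card_pins_le[of l] card_0_eq[OF finite_subset[OF pins_subset]]
  by (cases "pins l = {}") (auto simp: le_Suc_eq)

text \<open>Each of the \<open>n\<close> equations is satisfied by a pin or a triangle edge, each factor outside
  the triangle carries at most one pin and the triangle at most three events, so all these
  bounds are attained and no equation is satisfied twice.\<close>
lemma
  shows triangle_count_eq_3: "triangle_count = 3"
    and pins_outside_triangle: "l \<in> {3..<n} \<Longrightarrow> pins l \<noteq> {}"
    and edges_pins_disjoint: "q \<in> edges \<Longrightarrow> q \<notin> pins l"
    and pins_disjoint: "q \<in> pins l \<Longrightarrow> q \<in> pins l' \<Longrightarrow> l = l'"
proof -
  define A where "A l = (if l < n then pins l else edges)" for l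
  have sub: "A l \<subseteq> {..<n}" for l
    using pins_subset by (auto simp: A_def edges_def)
  have cov: "{..<n} \<subseteq> (\<Union>l\<in>{..n}. A l)"
    using eqs_covered by (force simp: A_def)
  have "{..n} = insert n {..<n}" "{..<n} = {0, 1, 2} \<union> {3..<n}" using n by auto
  then have sum_A: "(\<Sum>l\<in>{..n}. card (A l)) = triangle_count + (\<Sum>l\<in>{3..<n}. card (pins l))"
    using n by (simp add: A_def sum.union_disjoint card_pins card_edges)
  have outer_le: "(\<Sum>l\<in>{3..<n}. card (pins l)) \<le> (\<Sum>l\<in>{3..<n}. 1)"
    by (rule sum_mono) (rule card_pins_le, simp)
  then have le: "(\<Sum>l\<in>{..n}. card (A l)) \<le> card {..<n}"
    using sum_A triangle_count_le_3 n by simp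
  have eq: "(\<Sum>l\<in>{..n}. card (A l)) = card {..<n}"
    by (rule cover_sum_card_eq[OF _ _ _ cov le]) (use sub in auto)
  then show "triangle_count = 3"
    using sum_A triangle_count_le_3 outer_le n by simp
  have "(\<Sum>l\<in>{3..<n}. card (pins l)) = (\<Sum>l\<in>{3..<n}. 1)"
    using eq sum_A triangle_count_le_3 outer_le n by simp
  then show "l \<in> {3..<n} \<Longrightarrow> pins l \<noteq> {}"
    using sum_mono_inv[of "\<lambda>l. card (pins l)" "{3..<n}" "\<lambda>_. 1" l] card_pins_le by fastforce
  have disj: "\<lbrakk>k \<in> {..n}; k' \<in> {..n}; q \<in> A k; q \<in> A k'\<rbrakk> \<Longrightarrow> k = k'" for k k' q
    by (rule cover_disjoint[OF _ _ _ cov le]) (use sub in auto)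
  show "q \<in> edges \<Longrightarrow> q \<notin> pins l"
    using disj[of n l q] pins_empty[of l] by (cases "l < n") (auto simp: A_def)
  show "q \<in> pins l \<Longrightarrow> q \<in> pins l' \<Longrightarrow> l = l'"
    using disj[of l l' q] pins_empty[of l] pins_empty[of l'] by (cases "l < n"; cases "l' < n") (auto simp: A_def)
qed

lemma triangle_propagation:
  assumes "\<not> (turn_form (x 0) (x 1) = 0 \<and> turn_form (x 1) (x 2) = 0 \<and> turn_form (x 2) (x 0) = 0)"
    and pinned: "\<And>a. a < 3 \<Longrightarrow> pins a \<noteq> {} \<Longrightarrow> G a"
    and edge: "turn_form (x 0) (x 1) = 0 \<Longrightarrow> G 0 \<longleftrightarrow> G 1" "turn_form (x 1) (x 2) = 0 \<Longrightarrow> G 1 \<longleftrightarrow> G 2"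
      "turn_form (x 2) (x 0) = 0 \<Longrightarrow> G 2 \<longleftrightarrow> G 0"
  shows "G 0 \<and> G 1 \<and> G 2"
proof -
  have n3: "0 < n" "1 < n" "2 < n" using n by auto
  show ?thesis
  proof (rule triangle_closure[OF triangle_count_eq_3 assms(1)])
    show "\<not> (turn_form (x 0) (x 1) = 0 \<and> pins 0 \<noteq> {} \<and> pins 1 \<noteq> {})"
      using pinned_edge_free[OF n3(1,2)] by blast
    show "\<not> (turn_form (x 1) (x 2) = 0 \<and> pins 1 \<noteq> {} \<and> pins 2 \<noteq> {})"
      using pinned_edge_free[OF n3(2,3)] by blast
    show "\<not> (turn_form (x 2) (x 0) = 0 \<and> pins 2 \<noteq> {} \<and> pins 0 \<noteq> {})"
      using pinned_edge_free[OF n3(3,1)] by blast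
    show "pins 0 \<noteq> {} \<Longrightarrow> G 0" "pins 1 \<noteq> {} \<Longrightarrow> G 1" "pins 2 \<noteq> {} \<Longrightarrow> G 2"
      by (rule pinned; simp)+
  qed (fact edge)+
qed

lemma pinned_candidate: "a < n \<Longrightarrow> pins a \<noteq> {} \<Longrightarrow> candidate n (x a)"
proof -
  assume "a < n" "pins a \<noteq> {}"
  then obtain q where q: "q < n" "moment 2 (pin_root q) (x a) = 0" by (auto simp: pins_def)
  then have "proportional (x a) ((turn ^^ 0) (pin_vec (pin_root q)))"
    using proportional_pin_vec nonzero[OF \<open>a < n\<close>] by simp
  then show ?thesis using q(1) unfolding candidate_def by (intro exI[of _ 0]) auto
qed

lemma block_shape:
  assumes "l < n"
  shows "candidate n (x l) \<or> (\<exists>e. e * e = -1 \<and> proportional (x l) (eigen_vec e))"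
proof (cases "l < 3")
  case False
  then show ?thesis using pinned_candidate pins_outside_triangle[of l] assms by simp
next
  case True
  have nz: "nonzero2 (x 0)" "nonzero2 (x 1)" "nonzero2 (x 2)" using n nonzero by auto
  show ?thesis
  proof (cases "turn_form (x 0) (x 1) = 0 \<and> turn_form (x 1) (x 2) = 0 \<and> turn_form (x 2) (x 0) = 0")
    case True
    then obtain e where "e * e = -1" "x 0 1 = e * x 0 0" "x 0 0 \<noteq> 0" "x 1 1 = e * x 1 0" "x 1 0 \<noteq> 0"
        "x 2 1 = e * x 2 0" "x 2 0 \<noteq> 0"
      using turn_triangle nz by blast
    moreover have "proportional (x a) (eigen_vec e)" if "x a 1 = e * x a 0" "x a 0 \<noteq> 0" for a
      unfolding proportional_def eigen_vec_def using that by (intro exI[of _ "x a 0"]) auto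
    moreover have "l = 0 \<or> l = 1 \<or> l = 2" using \<open>l < 3\<close> by auto
    ultimately show ?thesis by blast
  next
    case False
    have "candidate n (x 0) \<and> candidate n (x 1) \<and> candidate n (x 2)"
    proof (rule triangle_propagation[OF False])
      fix a assume "a < 3" "pins a \<noteq> {}"
      then show "candidate n (x a)" using pinned_candidate n by simp
    qed (use candidate_edge nz in blast)+
    moreover have "l = 0 \<or> l = 1 \<or> l = 2" using \<open>l < 3\<close> by auto
    ultimately show ?thesis by blast
  qed
qed

lemma triangle_edges:
  "n - 1 \<in> edges \<longleftrightarrow> turn_form (x 0) (x 1) = 0" "edge_src (n - 1) = 0" "edge_dst (n - 1) = 1"
  "0 \<in> edges \<longleftrightarrow> turn_form (x 1) (x 2) = 0" "edge_src 0 = 1" "edge_dst 0 = 2"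
  "1 \<in> edges \<longleftrightarrow> turn_form (x 2) (x 0) = 0" "edge_src 1 = 2" "edge_dst 1 = 0"
  using n by (auto simp: edges_def edge_part_def is_edge_eq_def edge_src_def edge_dst_def)

lemma pin_tangent:
  assumes D: "\<And>q. q < n \<Longrightarrow> triangle_eq_diff n q x v = 0" and "q \<in> pins a"
  shows "moment 2 (pin_root q) (v a) = 0"
proof -
  have q: "q < n" "a \<in> pinned n q" "moment 2 (pin_root q) (x a) = 0"
    using assms(2) by (auto simp: pins_def)
  have "edge_part n q x \<noteq> 0"
    using edges_pins_disjoint[of q a] assms(2) q(1) by (auto simp: edges_def edge_part_def split: if_splits)
  moreover have "(\<Prod>l\<in>pinned n q - {a}. moment 2 (pin_root q) (x l)) \<noteq> 0"
  proof
    assume "(\<Prod>l\<in>pinned n q - {a}. moment 2 (pin_root q) (x l)) = 0"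
    then obtain l where "l \<in> pinned n q" "l \<noteq> a" "moment 2 (pin_root q) (x l) = 0"
      by (auto simp: prod_zero_iff)
    then have "q \<in> pins l" using q(1) by (simp add: pins_def)
    then show False using pins_disjoint assms(2) \<open>l \<noteq> a\<close> by blast
  qed
  ultimately show ?thesis by (rule triangle_eq_diff_pin[OF q(2,3) _ _ D[OF q(1)]])
qed

lemma edge_tangent:
  assumes D: "\<And>q. q < n \<Longrightarrow> triangle_eq_diff n q x v = 0" and "q \<in> edges"
  shows "turn_form (v (edge_src q)) (x (edge_dst q)) + turn_form (x (edge_src q)) (v (edge_dst q)) = 0"
proof -
  have q: "q < n" "is_edge_eq n q" "edge_part n q x = 0" using assms(2) by (auto simp: edges_def)
  have "pin_part n q x \<noteq> 0"
  proof
    assume "pin_part n q x = 0"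
    then obtain l where "l \<in> pinned n q" "moment 2 (pin_root q) (x l) = 0"
      by (auto simp: pin_part_def prod_zero_iff)
    then have "q \<in> pins l" using q(1) by (simp add: pins_def)
    then show False using edges_pins_disjoint assms(2) by blast
  qed
  then show ?thesis by (rule triangle_eq_diff_edge[OF n q _ D[OF q(1)]])
qed

lemma pinned_tangent:
  assumes "\<And>q. q < n \<Longrightarrow> triangle_eq_diff n q x v = 0" "a < n" "pins a \<noteq> {}"
  shows "multiple_of (v a) (x a)"
proof -
  obtain q where q: "q \<in> pins a" using assms(3) by blast
  then have "moment 2 (pin_root q) (x a) = 0" by (simp add: pins_def)
  then show ?thesis
    using multiple_of_pin_kernel[OF pin_tangent[OF assms(1) q]] nonzero[OF assms(2)] by blast
qed

lemma tangent_block: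
  assumes D: "\<And>q. q < n \<Longrightarrow> triangle_eq_diff n q x v = 0" and "l < n"
  shows "multiple_of (v l) (x l)"
proof (cases "l < 3")
  case False
  then show ?thesis using pinned_tangent[OF D assms(2)] pins_outside_triangle[of l] assms(2) by simp
next
  case True
  have nz: "nonzero2 (x 0)" "nonzero2 (x 1)" "nonzero2 (x 2)" using n nonzero by auto
  have T: "turn_form (x 0) (x 1) = 0 \<Longrightarrow> turn_form (v 0) (x 1) + turn_form (x 0) (v 1) = 0"
    "turn_form (x 1) (x 2) = 0 \<Longrightarrow> turn_form (v 1) (x 2) + turn_form (x 1) (v 2) = 0"
    "turn_form (x 2) (x 0) = 0 \<Longrightarrow> turn_form (v 2) (x 0) + turn_form (x 2) (v 0) = 0"
    using edge_tangent[OF D, of "n - 1", unfolded triangle_edges(1-3)]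
      edge_tangent[OF D, of 0, unfolded triangle_edges(4-6)]
      edge_tangent[OF D, of 1, unfolded triangle_edges(7-9)] by blast+
  have "multiple_of (v 0) (x 0) \<and> multiple_of (v 1) (x 1) \<and> multiple_of (v 2) (x 2)"
  proof (cases "turn_form (x 0) (x 1) = 0 \<and> turn_form (x 1) (x 2) = 0 \<and> turn_form (x 2) (x 0) = 0")
    case True
    then obtain e where e: "e * e = -1" "x 0 1 = e * x 0 0" "x 0 0 \<noteq> 0" "x 1 1 = e * x 1 0" "x 1 0 \<noteq> 0"
        "x 2 1 = e * x 2 0" "x 2 0 \<noteq> 0"
      using turn_triangle nz by blast
    have "v 0 1 - e * v 0 0 = 0 \<and> v 1 1 - e * v 1 0 = 0 \<and> v 2 1 - e * v 2 0 = 0"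
    proof (rule triangle_tangent[OF e(1) e(3) e(5) e(7)])
      show "- (1 + e) * x 1 0 * (v 0 1 - e * v 0 0) + (1 - e) * x 0 0 * (v 1 1 - e * v 1 0) = 0"
        using T(1) True turn_form_eigen(1)[OF e(4) e(1), of "v 0"] turn_form_eigen(2)[OF e(2) e(1), of "v 1"]
        by simp
      show "- (1 + e) * x 2 0 * (v 1 1 - e * v 1 0) + (1 - e) * x 1 0 * (v 2 1 - e * v 2 0) = 0"
        using T(2) True turn_form_eigen(1)[OF e(6) e(1), of "v 1"] turn_form_eigen(2)[OF e(4) e(1), of "v 2"]
        by simp
      show "- (1 + e) * x 0 0 * (v 2 1 - e * v 2 0) + (1 - e) * x 2 0 * (v 0 1 - e * v 0 0) = 0"
        using T(3) True turn_form_eigen(1)[OF e(2) e(1), of "v 2"] turn_form_eigen(2)[OF e(6) e(1), of "v 0"]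
        by simp
    qed
    moreover have "multiple_of (v a) (x a)" if "v a 1 - e * v a 0 = 0" "x a 1 = e * x a 0" "x a 0 \<noteq> 0" for a
      unfolding multiple_of_def using that by (intro exI[of _ "v a 0 / x a 0"]) auto
    ultimately show ?thesis using e by blast
  next
    case False
    show ?thesis
    proof (rule triangle_propagation[OF False])
      fix a assume "a < 3" "pins a \<noteq> {}"
      then show "multiple_of (v a) (x a)" using pinned_tangent[OF D] n by simp
    qed (use multiple_of_edge T nz in blast)+
  qed
  moreover have "l = 0 \<or> l = 1 \<or> l = 2" using \<open>l < 3\<close> by auto
  ultimately show ?thesis by blast
qed

end

lemma nonzero2_block:
  assumes "is_point n d p" "l < n" "d l = 2"
  shows "nonzero2 (p l)"
proof -
  obtain j where "j < d l" "p l j \<noteq> 0" using assms(1,2) by (auto simp: is_point_def)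
  then show ?thesis using assms(3) less_2_cases[of j] by (auto simp: nonzero2_def)
qed

lemma proportional_block:
  assumes "proportional (p l) u" "d l = 2"
  shows "\<exists>c. c \<noteq> 0 \<and> (\<forall>j<d l. p l j = c * u j)"
  using assms less_2_cases unfolding proportional_def by auto

context
  fixes n :: nat and d :: "nat \<Rightarrow> nat"
  assumes n: "3 \<le> n" and d: "\<And>l. l < n \<Longrightarrow> d l = 2"
begin

lemma in_Z_triangle_tensor_iff:
  "in_Z n d (\<lambda>q k. triangle_tensor n q) p \<longleftrightarrow> is_point n d p \<and> (\<forall>q<n. edge_part n q p * pin_part n q p = 0)"
  unfolding in_Z_def using mlform_triangle_tensor[OF n _ d] d by auto

lemma dform_triangle_tensor: "q < n \<Longrightarrow> dform n d q (triangle_tensor n q) p v = triangle_eq_diff n q p v"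
  unfolding dform_eq_sum_mlform triangle_eq_diff_def using mlform_triangle_tensor[OF n _ d] by simp

lemma triangle_solution_of_in_Z: "in_Z n d (\<lambda>q k. triangle_tensor n q) p \<Longrightarrow> triangle_solution n p"
  using n nonzero2_block d unfolding in_Z_triangle_tensor_iff by unfold_locales auto

lemma reduced_dim0_triangle_tensor:
  assumes "in_Z n d (\<lambda>q k. triangle_tensor n q) P"
  shows "reduced_dim0 n d (\<lambda>q k. triangle_tensor n q)"
proof -
  let ?C = "{u. \<exists>k<4. \<exists>q<n. u = (turn ^^ k) (pin_vec (pin_root q))} \<union> {eigen_vec \<i>, eigen_vec (- \<i>)}"
  have "\<exists>S. finite S \<and> (\<forall>p. in_Z n d (\<lambda>q k. triangle_tensor n q) p \<longrightarrow> (\<exists>q\<in>S. proj_eq n d q p))"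
  proof (rule finite_points_of_finite_blocks[where C = "\<lambda>l. ?C"])
    fix p assume "in_Z n d (\<lambda>q k. triangle_tensor n q) p"
    then interpret triangle_solution n p by (rule triangle_solution_of_in_Z)
    show "\<forall>l<n. \<exists>u\<in>?C. \<exists>c. c \<noteq> 0 \<and> (\<forall>j<d l. p l j = c * u j)"
    proof (intro allI impI)
      fix l assume "l < n"
      have "\<exists>u\<in>?C. proportional (p l) u"
        using block_shape[OF \<open>l < n\<close>]
      proof
        assume "candidate n (p l)"
        then obtain k q where "k < 4" "q < n" "proportional (p l) ((turn ^^ k) (pin_vec (pin_root q)))"
          unfolding candidate_def by blast
        then show ?thesis by (intro bexI[of _ "(turn ^^ k) (pin_vec (pin_root q))"]) auto
      next
        assume "\<exists>e. e * e = -1 \<and> proportional (p l) (eigen_vec e)"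
        then obtain e where "e = \<i> \<or> e = - \<i>" "proportional (p l) (eigen_vec e)"
          using square_eq_minus_one by blast
        then show ?thesis by (intro bexI[of _ "eigen_vec e"]) auto
      qed
      then obtain u where "u \<in> ?C" "proportional (p l) u" by blast
      then show "\<exists>u\<in>?C. \<exists>c. c \<noteq> 0 \<and> (\<forall>j<d l. p l j = c * u j)"
        using proportional_block[of p l u d] d[OF \<open>l < n\<close>] by blast
    qed
  qed (use finite_candidates in simp)
  moreover have "tangent_zero n d (\<lambda>q k. triangle_tensor n q) p" if "in_Z n d (\<lambda>q k. triangle_tensor n q) p" for p
    unfolding tangent_zero_def
  proof (intro allI impI)
    fix v l assume D: "\<forall>i<n. \<forall>k<d i - 1. dform n d i (triangle_tensor n i) p v = 0" and "l < n"
    interpret triangle_solution n p by (rule triangle_solution_of_in_Z[OF that])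
    have "triangle_eq_diff n q p v = 0" if "q < n" for q
      using D[rule_format, OF that, of 0] d[OF that] dform_triangle_tensor[OF that] by simp
    then have "multiple_of (v l) (p l)" by (rule tangent_block[OF _ \<open>l < n\<close>])
    then obtain c where "v l 0 = c * p l 0" "v l 1 = c * p l 1" unfolding multiple_of_def by blast
    then show "\<exists>c. \<forall>j<d l. v l j = c * p l j"
      using d[OF \<open>l < n\<close>] less_2_cases by (intro exI[of _ c]) auto
  qed
  ultimately show ?thesis unfolding reduced_dim0_def using assms by blast
qed

text \<open>The point with \<open>(1, \<i>)\<close> on the triangle and, for \<open>l \<ge> 3\<close>, the pin of the (non-triangle)
  equation \<open>l - 1\<close> on the factor \<open>l\<close>.\<close>
lemma in_Z_triangle_tensor_point:
  "in_Z n d (\<lambda>q k. triangle_tensor n q) (\<lambda>l. if l < 3 then eigen_vec \<i> else pin_vec (pin_root (l - 1)))"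
  (is "in_Z n d _ ?P")
  unfolding in_Z_triangle_tensor_iff
proof (intro conjI allI impI)
  show "is_point n d ?P"
    unfolding is_point_def
  proof (intro allI impI)
    fix l assume "l < n"
    have "?P l 1 \<noteq> 0" by (simp add: eigen_vec_def pin_vec_def)
    then show "\<exists>j<d l. ?P l j \<noteq> 0" using d[OF \<open>l < n\<close>] by (intro exI[of _ 1]) simp
  qed
  fix q assume "q < n"
  show "edge_part n q ?P * pin_part n q ?P = 0"
  proof (cases "is_edge_eq n q")
    case True
    have "edge_src q < 3" "edge_dst q < 3" by (simp_all add: edge_src_def edge_dst_def)
    then have "edge_part n q ?P = turn_form (eigen_vec \<i>) (eigen_vec \<i>)"
      using True by (simp add: edge_part_def)
    also have "\<dots> = 0" by (simp add: turn_form_def eigen_vec_def algebra_simps)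
    finally show ?thesis by simp
  next
    case False
    then have "Suc q \<in> pinned n q" "3 \<le> Suc q" using \<open>q < n\<close> by (auto simp: pinned_def is_edge_eq_def)
    moreover have "moment 2 (pin_root q) (?P (Suc q)) = 0"
      using \<open>3 \<le> Suc q\<close> by (simp add: moment_2 pin_vec_def)
    ultimately have "pin_part n q ?P = 0"
      unfolding pin_part_def by (intro prod_zero[OF finite_pinned]) blast
    then show ?thesis by simp
  qed
qed

lemma nonreal_pair_if_lines:
  "\<exists>f. reduced_dim0 n d f \<and>
     (\<exists>p q. in_Z n d f p \<and> in_Z n d f q \<and> \<not> proj_eq n d p q \<and> \<not> real_point n d p \<and> \<not> real_point n d q)"
proof -
  let ?P = "\<lambda>l. if l < 3 then eigen_vec \<i> else pin_vec (pin_root (l - 1))"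
  have "0 < n" using n by simp
  moreover have "moment (d 0) \<i> (?P 0) = 0" "moment (d 0) (cnj \<i>) (?P 0) \<noteq> 0"
    using d[of 0] n by (simp_all add: moment_2 eigen_vec_def)
  ultimately have "\<exists>p q. in_Z n d (\<lambda>q k. triangle_tensor n q) p \<and> in_Z n d (\<lambda>q k. triangle_tensor n q) q \<and>
      \<not> proj_eq n d p q \<and> \<not> real_point n d p \<and> \<not> real_point n d q"
    by (rule conj_pair_of_block_root[OF in_Z_triangle_tensor_point])
  then show ?thesis
    using reduced_dim0_triangle_tensor[OF in_Z_triangle_tensor_point] by blast
qed

end

theorem lemma3p6:
  fixes n :: nat and d :: "nat \<Rightarrow> nat"
  assumes "n \<ge> 3"
    and "2 \<le> d 0"
    and "\<And>i j. i \<le> j \<Longrightarrow> j < n \<Longrightarrow> d i \<le> d j"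
    and "d (n - 1) - 1 \<le> (\<Sum>i<n - 1. d i - 1)"
  shows "\<exists>f :: nat \<Rightarrow> nat \<Rightarrow> (nat \<Rightarrow> nat) \<Rightarrow> real.
           reduced_dim0 n d f \<and>
           (\<exists>p q. in_Z n d f p \<and> in_Z n d f q \<and> \<not> proj_eq n d p q \<and>
                  \<not> real_point n d p \<and> \<not> real_point n d q)"
proof -
  have mono: "\<And>i. i < n \<Longrightarrow> d 0 \<le> d i" "\<And>i. i < n \<Longrightarrow> d i \<le> d (n - 1)"
    using assms(1,3) by simp_all
  show ?thesis
  proof (cases "3 \<le> d (n - 1)")
    case True
    show ?thesis by (rule nonreal_pair_if_large_block[of n d]) (use assms(1,2,4) mono True in auto)
  next
    case False
    then have "\<And>l. l < n \<Longrightarrow> d l = 2"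
      using assms(2) mono by (metis le_antisym le_trans not_less_eq_eq numeral_2_eq_2 numeral_3_eq_3)
    then show ?thesis by (rule nonreal_pair_if_lines[OF assms(1)])
  qed
qed

end
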